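(* Let $n\ge3$, $k\ge0$, and let $\{v_s\}_{s\in I}$ be a basis of $V$. For a multi-index $\mathbf{j}=(j_1,\dots,j_{n-2},j_{n-1})$ of non-negative integers with $j_1+\dots+j_{n-2}\le k$ and $j_{n-1}=k-\sum_{i=1}^{n-2}j_i$, and $s\in I$, define $$\Psi^s_{\mathbf{j}}=\mathbf{CK}^{\mu_n}_{x_n}\Big[\underline{x}_{[n-1]}^{j_{n-1}}\mathbf{CK}^{\mu_{n-1}}_{x_{n-1}}\Big[\underline{x}_{[n-2]}^{j_{n-2}}\cdots\mathbf{CK}^{\mu_3}_{x_3}\big[\underline{x}_{[2]}^{j_2}\,\mathbf{CK}^{\mu_2}_{x_2}[x_1^{j_1}]\big]\cdots\Big]\Big]v_s .$$ Then the family $\{\Psi^s_{\mathbf{j}}\}$, over all such $\mathbf{j}$ and all $s\in I$, is a basis of $\mathcal{M}_k(\mathbb{R}^n;V)$.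
   Context: Fix $n\ge1$ and real parameters $\mu_1,\dots,\mu_n>0$; write $[\ell]=\{1,\dots,\ell\}$. For $i$, $r_i$ is the reflection $(r_if)(x)=f(x_1,\dots,-x_i,\dots,x_n)$ and $T_i=\partial_{x_i}+\frac{\mu_i}{x_i}(1-r_i)$. $\mathcal{C}\ell_n$ is generated by $e_1,\dots,e_n$ with $e_ie_j+e_je_i=-2\delta_{ij}$, $V$ is a fixed finite-dimensional left $\mathcal{C}\ell_n$-module, and operators act on $V$-valued (or $\mathcal{C}\ell_n$-valued) polynomials with $x_i,T_i,r_i$ acting on the polynomial factor and $e_i$ by left multiplication. $\underline{D}_{[\ell]}=\sum_{i\le\ell}e_iT_i$, $\underline{x}_{[\ell]}=\sum_{i\le\ell}e_ix_i$, $\underline{D}=\underline{D}_{[n]}$; $\mathcal{M}_k(\mathbb{R}^n;V)=\ker\underline{D}\cap(\mathcal{P}_k(\mathbb{R}^n)\otimes V)$ with $\mathcal{P}_k$ the homogeneous polynomials of degree $k$. For $2\le j\le n$ the Cauchy--Kovalevskaia extension operator acting on polynomials in $x_1,\dots,x_{j-1}$ (valued in $\mathcal{C}\ell_n$ or $V$) is $$\mathbf{CK}^{\mu_j}_{x_j}=\Gamma(\mu_j+\tfrac12)\Big[\widetilde I_{\mu_j-1/2}(x_j\underline{D}_{[j-1]})+\tfrac12 e_jx_j\underline{D}_{[j-1]}\,\widetilde I_{\mu_j+1/2}(x_j\underline{D}_{[j-1]})\Big],\qquad \widetilde I_\alpha(z)=\sum_{m\ge0}\frac{(z/2)^{2m}}{m!\,\Gamma(m+\alpha+1)},$$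 where $x_j$ commutes with $\underline{D}_{[j-1]}$ and the series terminate on polynomials. *)

theory Defs
  imports "HOL-Analysis.Analysis" "HOL-Library.Function_Algebras"
begin

text \<open>V-valued polynomials in the variables x_1,...,x_n are represented by their
coefficient functions: a polynomial p maps each exponent vector alpha (alpha i = exponent
of x_i, variables indexed from 1) to its coefficient in V.\<close>

type_synonym 'v vpoly = "(nat \<Rightarrow> nat) \<Rightarrow> 'v"

definition pscale :: "real \<Rightarrow> 'v::real_vector vpoly \<Rightarrow> 'v vpoly" where
  "pscale c p = (\<lambda>\<beta>. c *\<^sub>R p \<beta>)"

definition is_poly :: "nat \<Rightarrow> 'v::zero vpoly \<Rightarrow> bool" where
  "is_poly n p \<longleftrightarrow> finite {\<alpha>. p \<alpha> \<noteq> 0} \<and> (\<forall>\<alpha>. p \<alpha> \<noteq> 0 \<longrightarrow> (\<forall>i. i \<notin> {1..n} \<longrightarrow> \<alpha> i = 0))"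

definition homog :: "nat \<Rightarrow> nat \<Rightarrow> 'v::zero vpoly \<Rightarrow> bool" where
  "homog n k p \<longleftrightarrow> is_poly n p \<and> (\<forall>\<alpha>. p \<alpha> \<noteq> 0 \<longrightarrow> (\<Sum>i=1..n. \<alpha> i) = k)"

text \<open>total degree (bound used to truncate the terminating CK series)\<close>
definition tdeg :: "nat \<Rightarrow> 'v::zero vpoly \<Rightarrow> nat" where
  "tdeg n p = Max (insert 0 ((\<lambda>\<alpha>. \<Sum>i=1..n. \<alpha> i) ` {\<alpha>. p \<alpha> \<noteq> 0}))"

definition mono :: "(nat \<Rightarrow> nat) \<Rightarrow> 'v::zero \<Rightarrow> 'v vpoly" where
  "mono \<alpha> v = (\<lambda>\<beta>. if \<beta> = \<alpha> then v else 0)"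

definition mulx :: "nat \<Rightarrow> 'v::zero vpoly \<Rightarrow> 'v vpoly" where
  "mulx i p = (\<lambda>\<beta>. if 1 \<le> \<beta> i then p (\<beta>(i := \<beta> i - 1)) else 0)"

definition pder :: "nat \<Rightarrow> 'v::real_vector vpoly \<Rightarrow> 'v vpoly" where
  "pder i p = (\<lambda>\<beta>. real (\<beta> i + 1) *\<^sub>R p (\<beta>(i := \<beta> i + 1)))"

definition refl :: "nat \<Rightarrow> 'v::real_vector vpoly \<Rightarrow> 'v vpoly" where
  "refl i p = (\<lambda>\<beta>. ((-1::real) ^ \<beta> i) *\<^sub>R p \<beta>)"

text \<open>division by x_i (exact quotient of a polynomial divisible by x_i)\<close>
definition divx :: "nat \<Rightarrow> 'v vpoly \<Rightarrow> 'v vpoly" where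
  "divx i p = (\<lambda>\<beta>. p (\<beta>(i := \<beta> i + 1)))"

definition dunkl :: "(nat \<Rightarrow> real) \<Rightarrow> nat \<Rightarrow> 'v::real_vector vpoly \<Rightarrow> 'v vpoly" where
  "dunkl \<mu> i p = (\<lambda>\<beta>. pder i p \<beta> + \<mu> i *\<^sub>R divx i (\<lambda>\<gamma>. p \<gamma> - refl i p \<gamma>) \<beta>)"

definition dirac :: "(nat \<Rightarrow> real) \<Rightarrow> (nat \<Rightarrow> 'v \<Rightarrow> 'v) \<Rightarrow> nat \<Rightarrow> 'v::real_vector vpoly \<Rightarrow> 'v vpoly" where
  "dirac \<mu> E l p = (\<lambda>\<beta>. \<Sum>i=1..l. E i (dunkl \<mu> i p \<beta>))"

definition xvec :: "(nat \<Rightarrow> 'v \<Rightarrow> 'v) \<Rightarrow> nat \<Rightarrow> 'v::real_vector vpoly \<Rightarrow> 'v vpoly" where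
  "xvec E l p = (\<lambda>\<beta>. \<Sum>i=1..l. E i (mulx i p \<beta>))"

text \<open>Cauchy-Kovalevskaia extension CK^{mu_j}_{x_j}; the series in m terminates on
polynomials, and all terms with m > tdeg vanish, so it is summed up to tdeg.
(z/2)^{2m} with z = x_j D_[j-1] gives (x_j D_[j-1])^{2m} / 4^m.\<close>
definition CK :: "(nat \<Rightarrow> real) \<Rightarrow> (nat \<Rightarrow> 'v \<Rightarrow> 'v) \<Rightarrow> nat \<Rightarrow> nat \<Rightarrow> 'v::real_vector vpoly \<Rightarrow> 'v vpoly" where
  "CK \<mu> E n j p = (\<lambda>\<beta>. Gamma (\<mu> j + 1/2) *\<^sub>R
     (\<Sum>m\<le>tdeg n p.
        (1 / (4 ^ m * fact m * Gamma (real m + \<mu> j + 1/2))) *\<^sub>R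
           (((\<lambda>q. mulx j (dirac \<mu> E (j - 1) q)) ^^ (2 * m)) p \<beta>)
      + (1/2 * (1 / (4 ^ m * fact m * Gamma (real m + \<mu> j + 3/2)))) *\<^sub>R
           E j ((((\<lambda>q. mulx j (dirac \<mu> E (j - 1) q)) ^^ (2 * m + 1)) p \<beta>))))"

fun chain :: "(nat \<Rightarrow> real) \<Rightarrow> (nat \<Rightarrow> 'v \<Rightarrow> 'v) \<Rightarrow> nat \<Rightarrow> (nat \<Rightarrow> nat) \<Rightarrow> 'v::real_vector \<Rightarrow> nat \<Rightarrow> 'v vpoly" where
  "chain \<mu> E n jj v 0 = mono (\<lambda>_. 0) v"
| "chain \<mu> E n jj v (Suc 0) = mono ((\<lambda>_. 0)(1 := jj 1)) v"
| "chain \<mu> E n jj v (Suc (Suc l)) =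
     (xvec E (Suc (Suc l)) ^^ jj (Suc (Suc l))) (CK \<mu> E n (Suc (Suc l)) (chain \<mu> E n jj v (Suc l)))"

definition Psi :: "(nat \<Rightarrow> real) \<Rightarrow> (nat \<Rightarrow> 'v \<Rightarrow> 'v) \<Rightarrow> nat \<Rightarrow> nat \<Rightarrow> (nat \<Rightarrow> nat) \<Rightarrow> 'v::real_vector \<Rightarrow> 'v vpoly" where
  "Psi \<mu> E n k jj v =
     CK \<mu> E n n (chain \<mu> E n (jj(n - 1 := k - (\<Sum>i=1..n-2. jj i))) v (n - 1))"

definition mindex :: "nat \<Rightarrow> nat \<Rightarrow> (nat \<Rightarrow> nat) set" where
  "mindex n k = {jj. (\<forall>i. i \<notin> {1..n-2} \<longrightarrow> jj i = 0) \<and> (\<Sum>i=1..n-2. jj i) \<le> k}"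

definition monogenic :: "(nat \<Rightarrow> real) \<Rightarrow> (nat \<Rightarrow> 'v \<Rightarrow> 'v) \<Rightarrow> nat \<Rightarrow> nat \<Rightarrow> 'v::real_vector vpoly set" where
  "monogenic \<mu> E n k = {p. homog n k p \<and> dirac \<mu> E n p = (\<lambda>_. 0)}"

definition is_basis_fam :: "'v::real_vector vpoly set \<Rightarrow> ('i \<Rightarrow> 'v vpoly) \<Rightarrow> 'i set \<Rightarrow> bool" where
  "is_basis_fam S F A \<longleftrightarrow> inj_on F A \<and> \<not> module.dependent pscale (F ` A)
      \<and> module.span pscale (F ` A) = S"

text \<open>V is a left Cl_n-module: e_i acts by the linear map E i, e_i e_j + e_j e_i = -2 delta_ij.\<close>
definition clifford_module :: "nat \<Rightarrow> (nat \<Rightarrow> 'v::real_vector \<Rightarrow> 'v) \<Rightarrow> bool" where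
  "clifford_module n E \<longleftrightarrow> (\<forall>i\<in>{1..n}. linear (E i)) \<and>
     (\<forall>i\<in>{1..n}. \<forall>j\<in>{1..n}. \<forall>v. E i (E j v) + E j (E i v) = (if i = j then -2 *\<^sub>R v else 0))"

end

theory Submission
  imports Defs
begin

text \<open>Every monogenic polynomial is the CK extension in \<open>x\<^sub>n\<close> of its restriction to \<open>x\<^sub>n = 0\<close>:
  the extension of any polynomial in \<open>x\<^sub>1, \<dots>, x\<^sub>n\<^sub>-\<^sub>1\<close> is monogenic, because the Gamma-function
  coefficients make the Dirac image of the CK series telescope, and a monogenic polynomial vanishing
  on \<open>x\<^sub>n = 0\<close> vanishes identically. So \<open>CK\<^bsub>x\<^sub>n\<^esub>\<close> is an isomorphism from
  \<open>P\<^sub>k(\<real>\<^bsup>n-1\<^esup>) \<otimes> V\<close> onto \<open>M\<^sub>k(\<real>\<^sup>n; V)\<close>, and it remains to see that the iterated extensions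
  form a basis of \<open>P\<^sub>k(\<real>\<^bsup>n-1\<^esup>) \<otimes> V\<close>. They are independent by induction on the number of
  variables: as \<open>x D + D x\<close> acts on homogeneous polynomials as a nonzero scalar, the Fischer sum
  \<open>\<Sum>\<^sub>i x\<^sup>i M\<^sub>i\<close> of monogenic \<open>M\<^sub>i\<close> vanishes only if every \<open>M\<^sub>i\<close> does. There are as many of
  them as monomials \<open>x\<^sup>\<alpha> v\<^sub>s\<close>, so they also span.\<close>

instantiation "fun" :: (type, real_vector) real_vector
begin
definition scaleR_fun :: "real \<Rightarrow> ('a \<Rightarrow> 'b) \<Rightarrow> 'a \<Rightarrow> 'b" where
  "scaleR_fun r f = (\<lambda>x. r *\<^sub>R f x)"
instance
  by standard (auto simp: scaleR_fun_def fun_eq_iff scaleR_add_right scaleR_add_left)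
end

lemma scaleR_fun_apply [simp]: "(r *\<^sub>R f) x = r *\<^sub>R f x"
  by (simp add: scaleR_fun_def)

lemma pscale_eq_scaleR: "pscale = scaleR"
  by (simp add: pscale_def fun_eq_iff)

lemma is_basis_fam_iff:
  "is_basis_fam S F A \<longleftrightarrow> inj_on F A \<and> independent (F ` A) \<and> span (F ` A) = S"
  unfolding is_basis_fam_def pscale_eq_scaleR span_raw_def[symmetric] dependent_raw_def[symmetric] ..

lemma is_basis_fam_reindex:
  assumes h: "bij_betw h I J" and basis: "is_basis_fam S F J"
  shows "is_basis_fam S (\<lambda>x. F (h x)) I"
proof -
  have "(\<lambda>x. F (h x)) ` I = F ` J" using bij_betw_imp_surj_on[OF h] by (metis image_image)
  moreover have "inj_on (\<lambda>x. F (h x)) I"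
    using h basis comp_inj_on[of h I F] by (auto simp: is_basis_fam_def bij_betw_def o_def)
  ultimately show ?thesis using basis by (simp add: is_basis_fam_def)
qed

lemma sum_fun_apply: "(sum f A) x = (\<Sum>a\<in>A. f a x)"
  by (induction A rule: infinite_finite_induct) auto

lemma linear_funpow: "linear (f::'a::real_vector \<Rightarrow> 'a) \<Longrightarrow> linear (f ^^ r)"
proof (induction r)
  case 0 show ?case using linear_id by (simp add: id_def)
next
  case (Suc r) thus ?case using linear_compose[OF Suc.IH Suc.prems] by (simp add: o_def)
qed

definition indep_fam :: "('i \<Rightarrow> 'w::real_vector) \<Rightarrow> 'i set \<Rightarrow> bool" where
  "indep_fam F I \<longleftrightarrow> finite I \<and> (\<forall>c. (\<Sum>x\<in>I. c x *\<^sub>R F x) = 0 \<longrightarrow> (\<forall>x\<in>I. c x = 0))"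

lemma indep_famD: "indep_fam F I \<Longrightarrow> (\<Sum>x\<in>I. c x *\<^sub>R F x) = 0 \<Longrightarrow> x \<in> I \<Longrightarrow> c x = 0"
  unfolding indep_fam_def by blast

lemma indep_fam_cong: "(\<And>x. x \<in> I \<Longrightarrow> F x = G x) \<Longrightarrow> indep_fam F I = indep_fam G I"
  unfolding indep_fam_def by (metis (no_types, lifting) sum.cong)

lemma indep_fam_inj_on:
  assumes "indep_fam F I" shows "inj_on F I"
proof (rule inj_onI, rule ccontr)
  fix x y assume x: "x \<in> I" and y: "y \<in> I" and e: "F x = F y" and ne: "x \<noteq> y"
  have fI: "finite I" using assms by (simp add: indep_fam_def)
  define c where "c z = (if z = x then 1 else if z = y then -1 else (0::real))" for z
  have "(\<Sum>z\<in>I. c z *\<^sub>R F z) = (\<Sum>z\<in>{x, y}. c z *\<^sub>R F z)"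
    using x y fI by (intro sum.mono_neutral_right) (auto simp: c_def)
  also have "\<dots> = F x - F y" using ne by (simp add: c_def)
  also have "\<dots> = 0" using e by simp
  finally have "c x = 0" using indep_famD[OF assms _ x] by blast
  then show False by (simp add: c_def)
qed

lemma indep_fam_independent_image:
  assumes "indep_fam F I" shows "independent (F ` I)"
proof (rule real_vector.independent_if_scalars_zero)
  show "finite (F ` I)" using assms by (simp add: indep_fam_def)
  fix f a assume Z: "(\<Sum>x\<in>F ` I. f x *\<^sub>R x) = 0" and a: "a \<in> F ` I"
  have "(\<Sum>z\<in>I. f (F z) *\<^sub>R F z) = 0"
    using Z sum.reindex[OF indep_fam_inj_on[OF assms], of "\<lambda>x. f x *\<^sub>R x"] by simp
  then have "\<forall>z\<in>I. f (F z) = 0" using indep_famD[OF assms, of "\<lambda>z. f (F z)"] by blast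
  then show "f a = 0" using a by auto
qed

lemma subset_span_if_card_le:
  assumes fT: "finite T" and PT: "P \<subseteq> span T" and SP: "S \<subseteq> P" and iS: "independent S"
    and cT: "card T \<le> card S"
  shows "P \<subseteq> span S"
proof
  fix p assume p: "p \<in> P"
  show "p \<in> span S"
  proof (rule ccontr)
    assume np: "p \<notin> span S"
    then have pS: "p \<notin> S" using real_vector.span_base by blast
    have "independent (insert p S)" using iS np pS real_vector.independent_insert[of p S] by simp
    moreover have "insert p S \<subseteq> span T" using p SP PT by auto
    ultimately have "finite (insert p S) \<and> card (insert p S) \<le> card T"
      by (rule real_vector.independent_span_bound[OF fT])
    then show False using pS cT by auto
  qed
qed

lemma indep_fam_monomials:
  fixes B :: "'v::real_vector set"
  assumes indep: "independent B" and finB: "finite B" and finA: "finite A"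
  shows "indep_fam (\<lambda>(\<alpha>, v). mono \<alpha> v) (A \<times> B)"
  unfolding indep_fam_def
proof (intro conjI allI impI ballI)
  show "finite (A \<times> B)" using finA finB by simp
  fix c x assume Z: "(\<Sum>y\<in>A \<times> B. c y *\<^sub>R (case y of (\<alpha>, v) \<Rightarrow> mono \<alpha> v)) = 0" and x: "x \<in> A \<times> B"
  then obtain \<alpha> w where xw: "x = (\<alpha>, w)" and \<alpha>: "\<alpha> \<in> A" and w: "w \<in> B" by auto
  have coeff: "(\<Sum>v\<in>B. c (\<alpha>', v) *\<^sub>R mono \<alpha>' v \<alpha>) = (if \<alpha>' = \<alpha> then \<Sum>v\<in>B. c (\<alpha>', v) *\<^sub>R v else 0)"
    for \<alpha>' by (auto simp: mono_def)
  have "(\<Sum>y\<in>A \<times> B. c y *\<^sub>R (case y of (\<alpha>, v) \<Rightarrow> mono \<alpha> v)) = (\<Sum>\<alpha>'\<in>A. \<Sum>v\<in>B. c (\<alpha>', v) *\<^sub>R mono \<alpha>' v)"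
    by (subst sum.cartesian_product) (simp add: case_prod_beta)
  then have "(\<Sum>\<alpha>'\<in>A. \<Sum>v\<in>B. c (\<alpha>', v) *\<^sub>R mono \<alpha>' v) \<alpha> = 0" using Z by simp
  then have "(\<Sum>v\<in>B. c (\<alpha>, v) *\<^sub>R v) = 0"
    using \<alpha> finA by (simp add: sum_fun_apply coeff sum.delta')
  then show "c x = 0"
    using indep w xw unfolding real_vector.dependent_finite[OF finB] by auto
qed

definition supp_sat :: "((nat \<Rightarrow> nat) \<Rightarrow> bool) \<Rightarrow> 'v::zero vpoly \<Rightarrow> bool" where
  "supp_sat \<Phi> q \<longleftrightarrow> (\<forall>\<beta>. q \<beta> \<noteq> 0 \<longrightarrow> \<Phi> \<beta>)"

definition fin_supp :: "'v::zero vpoly \<Rightarrow> bool" where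
  "fin_supp q \<longleftrightarrow> finite {\<beta>. q \<beta> \<noteq> 0}"

definition vars_in :: "nat set \<Rightarrow> (nat \<Rightarrow> nat) \<Rightarrow> bool" where
  "vars_in S \<beta> \<longleftrightarrow> (\<forall>i. i \<notin> S \<longrightarrow> \<beta> i = 0)"

definition deg_on :: "nat set \<Rightarrow> (nat \<Rightarrow> nat) \<Rightarrow> nat" where
  "deg_on S \<beta> = (\<Sum>i\<in>S. \<beta> i)"

lemma homog_iff:
  "homog n k p \<longleftrightarrow> fin_supp p \<and> supp_sat (vars_in {1..n}) p \<and> supp_sat (\<lambda>\<beta>. deg_on {1..n} \<beta> = k) p"
  by (auto simp: homog_def is_poly_def fin_supp_def supp_sat_def vars_in_def deg_on_def)

lemma supp_sat_zero [simp]: "supp_sat \<Phi> 0"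
  by (simp add: supp_sat_def)

lemma supp_sat_add: "supp_sat \<Phi> (p::'v::real_vector vpoly) \<Longrightarrow> supp_sat \<Phi> q \<Longrightarrow> supp_sat \<Phi> (p + q)"
  unfolding supp_sat_def by (metis add.right_neutral plus_fun_apply)

lemma supp_sat_scale: "supp_sat \<Phi> (p::'v::real_vector vpoly) \<Longrightarrow> supp_sat \<Phi> (c *\<^sub>R p)"
  by (auto simp: supp_sat_def)

lemma supp_sat_sum: "(\<And>x. x \<in> A \<Longrightarrow> supp_sat \<Phi> (f x :: 'v::real_vector vpoly)) \<Longrightarrow> supp_sat \<Phi> (sum f A)"
  by (induction A rule: infinite_finite_induct) (auto intro: supp_sat_add)

lemma supp_sat_mono: "supp_sat \<Phi> p \<Longrightarrow> (\<And>\<beta>. \<Phi> \<beta> \<Longrightarrow> \<Psi> \<beta>) \<Longrightarrow> supp_sat \<Psi> p"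
  by (auto simp: supp_sat_def)

lemma supp_sat_conj: "supp_sat \<Phi> p \<Longrightarrow> supp_sat \<Psi> p \<Longrightarrow> supp_sat (\<lambda>\<beta>. \<Phi> \<beta> \<and> \<Psi> \<beta>) p"
  by (auto simp: supp_sat_def)

lemma supp_sat_False: "supp_sat (\<lambda>_. False) q \<Longrightarrow> q = 0"
  by (auto simp: supp_sat_def fun_eq_iff)

lemma fin_supp_zero [simp]: "fin_supp 0"
  by (simp add: fin_supp_def)

lemma fin_supp_add: "fin_supp (p::'v::real_vector vpoly) \<Longrightarrow> fin_supp q \<Longrightarrow> fin_supp (p + q)"
  unfolding fin_supp_def by (rule finite_subset[of _ "{\<beta>. p \<beta> \<noteq> 0} \<union> {\<beta>. q \<beta> \<noteq> 0}"]) auto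

lemma fin_supp_scale: "fin_supp (p::'v::real_vector vpoly) \<Longrightarrow> fin_supp (c *\<^sub>R p)"
  unfolding fin_supp_def by (rule finite_subset[of _ "{\<beta>. p \<beta> \<noteq> 0}"]) auto

lemma fin_supp_sum: "(\<And>x. x \<in> A \<Longrightarrow> fin_supp (f x :: 'v::real_vector vpoly)) \<Longrightarrow> fin_supp (sum f A)"
  by (induction A rule: infinite_finite_induct) (auto intro: fin_supp_add)

lemma deg_on_upd:
  assumes "finite S" "i \<in> S" shows "deg_on S (\<beta>(i := x)) + \<beta> i = deg_on S \<beta> + x"
proof -
  have "deg_on S (\<beta>(i := x)) = x + (\<Sum>k\<in>S - {i}. \<beta> k)"
    using assms by (simp add: deg_on_def sum.remove)
  moreover have "deg_on S \<beta> = \<beta> i + (\<Sum>k\<in>S - {i}. \<beta> k)"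
    using assms by (simp add: deg_on_def sum.remove)
  ultimately show ?thesis by simp
qed

lemma deg_on_mono: "S \<subseteq> T \<Longrightarrow> finite T \<Longrightarrow> deg_on S \<beta> \<le> deg_on T \<beta>"
  unfolding deg_on_def by (rule sum_mono2) auto

lemma tdeg_bound:
  assumes "fin_supp p" "p \<beta> \<noteq> 0" shows "deg_on {1..N} \<beta> \<le> tdeg N p"
proof -
  have "finite ((\<lambda>\<alpha>. \<Sum>i=1..N. \<alpha> i) ` {\<alpha>. p \<alpha> \<noteq> 0})" using assms(1) by (simp add: fin_supp_def)
  then show ?thesis unfolding tdeg_def deg_on_def using assms(2) by (intro Max_ge) auto
qed

lemma supp_sat_deg_le_tdeg:
  assumes "fin_supp q" "l \<le> N" shows "supp_sat (\<lambda>\<beta>. deg_on {1..l} \<beta> \<le> tdeg N q) q"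
  unfolding supp_sat_def
proof (intro allI impI)
  fix \<beta> assume "q \<beta> \<noteq> 0"
  then have "deg_on {1..N} \<beta> \<le> tdeg N q" by (rule tdeg_bound[OF assms(1)])
  moreover have "deg_on {1..l} \<beta> \<le> deg_on {1..N} \<beta>" using assms(2) by (intro deg_on_mono) auto
  ultimately show "deg_on {1..l} \<beta> \<le> tdeg N q" by linarith
qed

lemma subspace_homog: "subspace {p :: 'v::real_vector vpoly. homog l d p}"
  unfolding real_vector.subspace_def homog_iff
  by (auto intro: fin_supp_add fin_supp_scale supp_sat_add supp_sat_scale)

lemma homog_scale: "homog l d p \<Longrightarrow> homog l d (c *\<^sub>R p)"
  by (simp add: homog_iff fin_supp_scale supp_sat_scale)

lemma homog_sum:
  assumes "\<And>x. x \<in> A \<Longrightarrow> homog l d (f x :: 'v::real_vector vpoly)" shows "homog l d (sum f A)"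
proof -
  have "sum f A \<in> {p. homog l d p}"
    using assms by (intro real_vector.subspace_sum[OF subspace_homog]) auto
  then show ?thesis by simp
qed

lemma homog_vars_mono:
  assumes "homog l d p" "l \<le> l'" shows "homog l' d p"
proof -
  have "supp_sat (\<lambda>\<beta>. vars_in {1..l} \<beta> \<and> deg_on {1..l} \<beta> = d) p"
    using assms(1) by (intro supp_sat_conj) (auto simp: homog_iff)
  then have "supp_sat (\<lambda>\<beta>. vars_in {1..l'} \<beta> \<and> deg_on {1..l'} \<beta> = d) p"
  proof (rule supp_sat_mono)
    fix \<beta> assume \<beta>: "vars_in {1..l} \<beta> \<and> deg_on {1..l} \<beta> = d"
    have "deg_on {1..l'} \<beta> = deg_on {1..l} \<beta>"
      unfolding deg_on_def using \<beta> assms(2) by (intro sum.mono_neutral_right) (auto simp: vars_in_def)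
    then show "vars_in {1..l'} \<beta> \<and> deg_on {1..l'} \<beta> = d" using \<beta> assms(2) by (auto simp: vars_in_def)
  qed
  then show ?thesis using assms(1) unfolding homog_iff by (metis (mono_tags) supp_sat_mono)
qed

lemma homog_hyperplane: "homog l d p \<Longrightarrow> l < j \<Longrightarrow> supp_sat (\<lambda>\<beta>. \<beta> j = 0) p"
  unfolding homog_iff by (auto simp: vars_in_def supp_sat_def)

definition exps :: "nat \<Rightarrow> nat \<Rightarrow> (nat \<Rightarrow> nat) set" where
  "exps l d = {\<alpha>. (\<forall>i. i \<notin> {1..l} \<longrightarrow> \<alpha> i = 0) \<and> (\<Sum>i=1..l. \<alpha> i) = d}"

lemma exps_finite: "finite (exps l d)"
proof -
  let ?ext = "\<lambda>f::nat\<Rightarrow>nat. \<lambda>i. if i \<in> {1..l} then f i else 0"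
  have "exps l d \<subseteq> ?ext ` (PiE {1..l} (\<lambda>_. {0..d}))"
  proof
    fix \<alpha> assume a: "\<alpha> \<in> exps l d"
    have "\<alpha> i \<le> d" if "i \<in> {1..l}" for i
      using a member_le_sum[OF that, of \<alpha>] by (simp add: exps_def)
    then have "restrict \<alpha> {1..l} \<in> PiE {1..l} (\<lambda>_. {0..d})" by auto
    moreover have "\<alpha> = ?ext (restrict \<alpha> {1..l})" using a by (auto simp: exps_def fun_eq_iff)
    ultimately show "\<alpha> \<in> ?ext ` (PiE {1..l} (\<lambda>_. {0..d}))" by blast
  qed
  moreover have "finite (PiE {1..l} (\<lambda>_. {0..d::nat}))" by (intro finite_PiE) auto
  ultimately show ?thesis by (meson finite_imageI finite_subset)
qed

lemma exps_SucD:
  assumes "J \<in> exps (Suc l) d"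
  shows "J (Suc l) \<le> d" and "J(Suc l := 0) \<in> exps l (d - J (Suc l))"
proof -
  have "(\<Sum>i=1..l. (J(Suc l := 0)) i) = (\<Sum>i=1..l. J i)" by (rule sum.cong) auto
  then show "J (Suc l) \<le> d" "J(Suc l := 0) \<in> exps l (d - J (Suc l))"
    using assms by (auto simp: exps_def)
qed

lemma homog_iff_supp_exps: "homog l d p \<longleftrightarrow> (\<forall>\<beta>. p \<beta> \<noteq> 0 \<longrightarrow> \<beta> \<in> exps l d)"
proof
  assume h: "\<forall>\<beta>. p \<beta> \<noteq> 0 \<longrightarrow> \<beta> \<in> exps l d"
  then have "{\<beta>. p \<beta> \<noteq> 0} \<subseteq> exps l d" by auto
  then have "finite {\<beta>. p \<beta> \<noteq> 0}" using exps_finite by (rule finite_subset)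
  then show "homog l d p" using h by (simp add: homog_def is_poly_def exps_def)
qed (simp add: homog_def is_poly_def exps_def)

lemma exps_Suc_fibre:
  assumes "i \<le> d"
  shows "bij_betw (\<lambda>x. ((fst x)(Suc l := i), snd x)) (exps l (d - i) \<times> B)
           {x \<in> exps (Suc l) d \<times> B. fst x (Suc l) = i}"
proof (rule bij_betw_byWitness[where f' = "\<lambda>x. ((fst x)(Suc l := 0), snd x)"])
  have sum_upd: "(\<Sum>k=1..l. (J(Suc l := a)) k) = (\<Sum>k=1..l. J k)" for J :: "nat \<Rightarrow> nat" and a
    by (rule sum.cong) auto
  show "\<forall>x\<in>exps l (d - i) \<times> B. ((fst ((fst x)(Suc l := i), snd x))(Suc l := 0), snd ((fst x)(Suc l := i), snd x)) = x"
    by (auto simp: exps_def fun_eq_iff)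
  show "\<forall>x\<in>{x \<in> exps (Suc l) d \<times> B. fst x (Suc l) = i}.
          ((fst ((fst x)(Suc l := 0), snd x))(Suc l := i), snd ((fst x)(Suc l := 0), snd x)) = x"
    by (auto simp: fun_eq_iff)
  show "(\<lambda>x. ((fst x)(Suc l := i), snd x)) ` (exps l (d - i) \<times> B) \<subseteq> {x \<in> exps (Suc l) d \<times> B. fst x (Suc l) = i}"
    using assms by (auto simp: exps_def sum_upd)
  show "(\<lambda>x. ((fst x)(Suc l := 0), snd x)) ` {x \<in> exps (Suc l) d \<times> B. fst x (Suc l) = i} \<subseteq> exps l (d - i) \<times> B"
    by (auto simp: exps_def sum_upd)
qed

lemma homog_subset_span_monomials:
  fixes B :: "'v::real_vector set"
  assumes finB: "finite B" and spanB: "span B = UNIV"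
  shows "{p. homog l d p} \<subseteq> span ((\<lambda>(\<alpha>, v). mono \<alpha> v) ` (exps l d \<times> B))" (is "_ \<subseteq> span ?T")
proof
  fix p :: "'v vpoly" assume "p \<in> {p. homog l d p}"
  then have inA: "p \<beta> \<noteq> 0 \<Longrightarrow> \<beta> \<in> exps l d" for \<beta> by (simp add: homog_iff_supp_exps)
  have p: "p = (\<Sum>\<alpha>\<in>exps l d. mono \<alpha> (p \<alpha>))"
  proof
    fix \<beta> :: "nat \<Rightarrow> nat"
    have "(\<Sum>\<alpha>\<in>exps l d. mono \<alpha> (p \<alpha>)) \<beta> = (if \<beta> \<in> exps l d then p \<beta> else 0)"
      using exps_finite by (simp add: sum_fun_apply mono_def sum.delta)
    then show "p \<beta> = (\<Sum>\<alpha>\<in>exps l d. mono \<alpha> (p \<alpha>)) \<beta>" using inA by auto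
  qed
  have "mono \<alpha> (p \<alpha>) \<in> span ?T" if \<alpha>: "\<alpha> \<in> exps l d" for \<alpha>
  proof -
    obtain u where u: "p \<alpha> = (\<Sum>b\<in>B. u b *\<^sub>R b)"
      using spanB real_vector.span_finite[OF finB] by auto
    have "mono \<alpha> (p \<alpha>) = (\<Sum>b\<in>B. u b *\<^sub>R mono \<alpha> b)"
      unfolding u by (rule ext) (auto simp: mono_def sum_fun_apply)
    moreover have "mono \<alpha> b \<in> span ?T" if "b \<in> B" for b
      using \<alpha> that by (intro real_vector.span_base) auto
    ultimately show ?thesis by (auto intro: real_vector.span_sum real_vector.span_scale)
  qed
  then show "p \<in> span ?T" by (subst p) (rule real_vector.span_sum)
qed

definition dunkl_coeff :: "(nat \<Rightarrow> real) \<Rightarrow> nat \<Rightarrow> nat \<Rightarrow> real" where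
  "dunkl_coeff \<mu> i a = real (a + 1) + \<mu> i * (1 - (-1) ^ (a + 1))"

lemma dunkl_eq: "dunkl \<mu> i p \<beta> = dunkl_coeff \<mu> i (\<beta> i) *\<^sub>R p (\<beta>(i := \<beta> i + 1))"
  by (simp add: dunkl_def pder_def divx_def refl_def dunkl_coeff_def algebra_simps)

lemma dunkl_coeff_pos: "\<mu> i \<ge> 0 \<Longrightarrow> dunkl_coeff \<mu> i a > 0"
proof -
  assume "\<mu> i \<ge> 0"
  moreover have "1 - (-1::real) ^ (a + 1) \<ge> 0" by (cases "even (a + 1)") auto
  ultimately have "\<mu> i * (1 - (-1::real) ^ (a + 1)) \<ge> 0" by (rule mult_nonneg_nonneg)
  then show ?thesis unfolding dunkl_coeff_def by linarith
qed

lemma dunkl_coeff_even: "dunkl_coeff \<mu> j (2 * m) = real (2 * m + 1) + 2 * \<mu> j"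
  by (simp add: dunkl_coeff_def)

lemma dunkl_coeff_odd: "dunkl_coeff \<mu> j (2 * k + 1) = real (2 * k + 2)"
  by (simp add: dunkl_coeff_def)

lemma dunkl_coeff_pair:
  "(if 1 \<le> a then dunkl_coeff \<mu> i (a - 1) else 0) + dunkl_coeff \<mu> i a = real (2 * a + 1) + 2 * \<mu> i"
  by (cases a) (simp_all add: dunkl_coeff_def algebra_simps)

lemma linear_mulx: "linear (mulx i)"
  by (rule linearI) (auto simp: mulx_def fun_eq_iff)

lemma linear_dunkl: "linear (dunkl \<mu> i)"
  by (rule linearI) (auto simp: dunkl_eq fun_eq_iff algebra_simps)

lemma mulx_pow_eq:
  "(mulx j ^^ r) q \<beta> = (if r \<le> \<beta> j then (q::'v::zero vpoly) (\<beta>(j := \<beta> j - r)) else 0)"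
proof (induction r arbitrary: \<beta>)
  case (Suc r)
  have "(mulx j ^^ Suc r) q \<beta> = (if 1 \<le> \<beta> j then (mulx j ^^ r) q (\<beta>(j := \<beta> j - 1)) else 0)"
    by (simp add: mulx_def)
  also have "\<dots> = (if Suc r \<le> \<beta> j then q (\<beta>(j := \<beta> j - Suc r)) else 0)"
    by (simp only: Suc.IH) auto
  finally show ?case .
qed simp

lemma dunkl_hyperplane:
  assumes "supp_sat (\<lambda>\<beta>. \<beta> j = 0) (q::'v::real_vector vpoly)"
  shows "dunkl \<mu> j q = 0"
  using assms by (auto simp: fun_eq_iff dunkl_eq supp_sat_def)

lemma dunkl_mulx_pow_hyperplane:
  assumes "supp_sat (\<lambda>\<beta>. \<beta> j = 0) (q::'v::real_vector vpoly)"
  shows "dunkl \<mu> j ((mulx j ^^ Suc r) q) = dunkl_coeff \<mu> j r *\<^sub>R (mulx j ^^ r) q"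
proof
  fix \<beta> :: "nat \<Rightarrow> nat"
  have "q (\<beta>(j := \<beta> j - r)) = 0" if "\<beta> j \<noteq> r" "r \<le> \<beta> j"
    using assms that by (auto simp: supp_sat_def)
  moreover have "(mulx j ^^ Suc r) q (\<beta>(j := \<beta> j + 1)) = (if r \<le> \<beta> j then q (\<beta>(j := \<beta> j - r)) else 0)"
    by (subst mulx_pow_eq) auto
  ultimately show "dunkl \<mu> j ((mulx j ^^ Suc r) q) \<beta> = (dunkl_coeff \<mu> j r *\<^sub>R (mulx j ^^ r) q) \<beta>"
    by (cases "\<beta> j = r") (auto simp: dunkl_eq mulx_pow_eq simp del: funpow.simps)
qed

lemma mulx_dunkl_comm: "i \<noteq> j \<Longrightarrow> mulx j (dunkl \<mu> i q) = dunkl \<mu> i (mulx j (q::'v::real_vector vpoly))"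
  by (simp add: fun_eq_iff mulx_def dunkl_eq fun_upd_twist)

lemma dunkl_mulx_same: "dunkl \<mu> j (mulx j q) \<beta> = dunkl_coeff \<mu> j (\<beta> j) *\<^sub>R (q::'v::real_vector vpoly) \<beta>"
  by (simp add: dunkl_eq mulx_def)

lemma mulx_dunkl_same:
  "mulx j (dunkl \<mu> j q) \<beta> = (if 1 \<le> \<beta> j then dunkl_coeff \<mu> j (\<beta> j - 1) *\<^sub>R (q::'v::real_vector vpoly) \<beta> else 0)"
  by (simp add: dunkl_eq mulx_def)

lemma mulx_dunkl_add_dunkl_mulx:
  "mulx i (dunkl \<mu> i h) \<beta> + dunkl \<mu> i (mulx i h) \<beta> = (real (2 * \<beta> i + 1) + 2 * \<mu> i) *\<^sub>R (h::'v::real_vector vpoly) \<beta>"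
proof -
  have "mulx i (dunkl \<mu> i h) \<beta> + dunkl \<mu> i (mulx i h) \<beta>
      = ((if 1 \<le> \<beta> i then dunkl_coeff \<mu> i (\<beta> i - 1) else 0) + dunkl_coeff \<mu> i (\<beta> i)) *\<^sub>R h \<beta>"
    unfolding mulx_dunkl_same dunkl_mulx_same by (simp add: scaleR_add_left)
  then show ?thesis unfolding dunkl_coeff_pair .
qed

lemma fin_supp_mulx: "fin_supp p \<Longrightarrow> fin_supp (mulx i p)"
proof -
  assume "fin_supp p"
  have "{\<beta>. mulx i p \<beta> \<noteq> 0} \<subseteq> (\<lambda>\<beta>. \<beta>(i := \<beta> i + 1)) ` {\<beta>. p \<beta> \<noteq> 0}"
  proof
    fix \<beta> assume "\<beta> \<in> {\<beta>. mulx i p \<beta> \<noteq> 0}"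
    then have "1 \<le> \<beta> i" "p (\<beta>(i := \<beta> i - 1)) \<noteq> 0" by (auto simp: mulx_def split: if_splits)
    then show "\<beta> \<in> (\<lambda>\<beta>. \<beta>(i := \<beta> i + 1)) ` {\<beta>. p \<beta> \<noteq> 0}"
      by (intro image_eqI[of _ _ "\<beta>(i := \<beta> i - 1)"]) auto
  qed
  then show ?thesis using \<open>fin_supp p\<close> unfolding fin_supp_def by (meson finite_imageI finite_subset)
qed

lemma fin_supp_dunkl: "fin_supp p \<Longrightarrow> fin_supp (dunkl \<mu> i p)"
proof -
  assume "fin_supp p"
  have "inj (\<lambda>\<beta>::nat \<Rightarrow> nat. \<beta>(i := \<beta> i + 1))"
    by (rule injI) (metis fun_upd_idem_iff fun_upd_upd add_right_cancel fun_upd_same)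
  then have "finite ((\<lambda>\<beta>. \<beta>(i := \<beta> i + 1)) -` {\<beta>. p \<beta> \<noteq> 0})"
    using \<open>fin_supp p\<close> unfolding fin_supp_def by (intro finite_vimageI) auto
  moreover have "{\<beta>. dunkl \<mu> i p \<beta> \<noteq> 0} \<subseteq> (\<lambda>\<beta>. \<beta>(i := \<beta> i + 1)) -` {\<beta>. p \<beta> \<noteq> 0}"
    by (auto simp: dunkl_eq)
  ultimately show ?thesis unfolding fin_supp_def by (rule finite_subset[rotated])
qed

lemma supp_sat_mulx:
  "supp_sat \<Phi> p \<Longrightarrow> (\<And>\<beta>. 1 \<le> \<beta> i \<Longrightarrow> \<Phi> (\<beta>(i := \<beta> i - 1)) \<Longrightarrow> \<Psi> \<beta>) \<Longrightarrow> supp_sat \<Psi> (mulx i p)"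
  by (auto simp: supp_sat_def mulx_def split: if_splits)

subsection \<open>Clifford multiplication and the Dirac operator\<close>

definition cmul :: "(nat \<Rightarrow> 'v \<Rightarrow> 'v) \<Rightarrow> nat \<Rightarrow> 'v vpoly \<Rightarrow> 'v vpoly" where
  "cmul E j q = (\<lambda>\<beta>. E j (q \<beta>))"

lemma dirac_eq_sum: "dirac \<mu> E l p = (\<Sum>i=1..l. cmul E i (dunkl \<mu> i p))"
  by (simp add: fun_eq_iff dirac_def cmul_def sum_fun_apply)

lemma xvec_eq_sum: "xvec E l p = (\<Sum>i=1..l. cmul E i (mulx i p))"
  by (simp add: fun_eq_iff xvec_def cmul_def sum_fun_apply)

definition ck_step :: "(nat \<Rightarrow> real) \<Rightarrow> (nat \<Rightarrow> 'v \<Rightarrow> 'v) \<Rightarrow> nat \<Rightarrow> 'v::real_vector vpoly \<Rightarrow> 'v vpoly" where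
  "ck_step \<mu> E j q = mulx j (dirac \<mu> E (j - 1) q)"

locale dunkl_clifford =
  fixes n :: nat and \<mu> :: "nat \<Rightarrow> real" and E :: "nat \<Rightarrow> 'v::real_vector \<Rightarrow> 'v"
  assumes mu_pos: "\<forall>i\<in>{1..n}. \<mu> i > 0" and clif: "clifford_module n E"
begin

lemma E_linear: "i \<in> {1..n} \<Longrightarrow> linear (E i)"
  using clif by (simp add: clifford_module_def)

lemma E_add: "i \<in> {1..n} \<Longrightarrow> E i (x + y) = E i x + E i y"
  using E_linear linear_add by blast

lemma E_scale: "i \<in> {1..n} \<Longrightarrow> E i (c *\<^sub>R x) = c *\<^sub>R E i x"
  using E_linear linear_scale by blast

lemma E_zero: "i \<in> {1..n} \<Longrightarrow> E i 0 = 0"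
  using E_linear linear_0 by blast

lemma E_sum: "i \<in> {1..n} \<Longrightarrow> E i (sum f A) = (\<Sum>a\<in>A. E i (f a))"
  using E_linear linear_sum by blast

lemma E_square: "i \<in> {1..n} \<Longrightarrow> E i (E i v) = - v"
proof -
  assume i: "i \<in> {1..n}"
  have "E i (E i v) + E i (E i v) = -2 *\<^sub>R v" using clif i by (simp add: clifford_module_def)
  then have "2 *\<^sub>R E i (E i v) = 2 *\<^sub>R (- v)" by (simp add: scaleR_2)
  then show ?thesis using scaleR_cancel_left[of 2 "E i (E i v)" "- v"] by simp
qed

lemma E_anticomm: "i \<in> {1..n} \<Longrightarrow> j \<in> {1..n} \<Longrightarrow> i \<noteq> j \<Longrightarrow> E i (E j v) = - E j (E i v)"
  using clif by (simp add: clifford_module_def eq_neg_iff_add_eq_0)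

lemma mu_nonneg: "i \<in> {1..n} \<Longrightarrow> \<mu> i \<ge> 0"
  using mu_pos by fastforce

lemma linear_cmul: "j \<in> {1..n} \<Longrightarrow> linear (cmul E j)"
  by (rule linearI) (auto simp: cmul_def fun_eq_iff E_add E_scale)

lemma cmul_square: "j \<in> {1..n} \<Longrightarrow> cmul E j (cmul E j q) = - q"
  by (simp add: cmul_def fun_eq_iff E_square)

lemma linear_dirac: "l \<le> n \<Longrightarrow> linear (dirac \<mu> E l)"
  unfolding dirac_eq_sum[abs_def]
  by (intro linear_compose_sum ballI linear_compose[OF linear_dunkl linear_cmul, unfolded o_def]) auto

lemma linear_xvec: "l \<le> n \<Longrightarrow> linear (xvec E l)"
  unfolding xvec_eq_sum[abs_def]
  by (intro linear_compose_sum ballI linear_compose[OF linear_mulx linear_cmul, unfolded o_def]) auto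

lemma supp_sat_cmul: "j \<in> {1..n} \<Longrightarrow> supp_sat \<Phi> p \<Longrightarrow> supp_sat \<Phi> (cmul E j p)"
  unfolding supp_sat_def cmul_def by (metis E_zero)

lemma fin_supp_cmul: "j \<in> {1..n} \<Longrightarrow> fin_supp p \<Longrightarrow> fin_supp (cmul E j p)"
  unfolding fin_supp_def by (erule finite_subset[rotated]) (auto simp: cmul_def E_zero)

lemma supp_sat_dirac:
  assumes "l \<le> n" "supp_sat \<Phi> p" "\<And>i \<beta>. i \<in> {1..l} \<Longrightarrow> \<Phi> (\<beta>(i := \<beta> i + 1)) \<Longrightarrow> \<Psi> \<beta>"
  shows "supp_sat \<Psi> (dirac \<mu> E l p)"
  unfolding supp_sat_def
proof (intro allI impI)
  fix \<beta> assume "dirac \<mu> E l p \<beta> \<noteq> 0"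
  then obtain i where i: "i \<in> {1..l}" "E i (dunkl \<mu> i p \<beta>) \<noteq> 0"
    unfolding dirac_def by (rule sum.not_neutral_contains_not_neutral)
  then have "p (\<beta>(i := \<beta> i + 1)) \<noteq> 0" using assms(1) E_zero[of i] by (auto simp: dunkl_eq)
  then show "\<Psi> \<beta>" using assms(2,3) i(1) by (auto simp: supp_sat_def)
qed

lemma supp_sat_xvec:
  assumes "l \<le> n" "supp_sat \<Phi> p" "\<And>i \<beta>. i \<in> {1..l} \<Longrightarrow> 1 \<le> \<beta> i \<Longrightarrow> \<Phi> (\<beta>(i := \<beta> i - 1)) \<Longrightarrow> \<Psi> \<beta>"
  shows "supp_sat \<Psi> (xvec E l p)"
  unfolding supp_sat_def
proof (intro allI impI)
  fix \<beta> assume "xvec E l p \<beta> \<noteq> 0"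
  then obtain i where i: "i \<in> {1..l}" "E i (mulx i p \<beta>) \<noteq> 0"
    unfolding xvec_def by (rule sum.not_neutral_contains_not_neutral)
  then have "1 \<le> \<beta> i" "p (\<beta>(i := \<beta> i - 1)) \<noteq> 0"
    using assms(1) E_zero[of i] by (auto simp: mulx_def split: if_splits)
  then show "\<Psi> \<beta>" using assms(2,3) i(1) by (auto simp: supp_sat_def)
qed

lemma fin_supp_dirac: "l \<le> n \<Longrightarrow> fin_supp p \<Longrightarrow> fin_supp (dirac \<mu> E l p)"
  unfolding dirac_eq_sum by (intro fin_supp_sum fin_supp_cmul fin_supp_dunkl) auto

lemma fin_supp_xvec: "l \<le> n \<Longrightarrow> fin_supp p \<Longrightarrow> fin_supp (xvec E l p)"
  unfolding xvec_eq_sum by (intro fin_supp_sum fin_supp_cmul fin_supp_mulx) auto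

lemma dunkl_cmul: "j \<in> {1..n} \<Longrightarrow> dunkl \<mu> i (cmul E j q) = cmul E j (dunkl \<mu> i q)"
  by (simp add: fun_eq_iff dunkl_eq cmul_def E_scale)

lemma mulx_dirac_comm: "l < j \<Longrightarrow> l \<le> n \<Longrightarrow> mulx j (dirac \<mu> E l q) = dirac \<mu> E l (mulx j q)"
proof
  fix \<beta> :: "nat \<Rightarrow> nat" assume lj: "l < j" and ln: "l \<le> n"
  have "mulx j (dirac \<mu> E l q) \<beta> = (\<Sum>i=1..l. E i (mulx j (dunkl \<mu> i q) \<beta>))"
    using ln by (auto simp: mulx_def dirac_def E_zero intro!: sum.neutral[symmetric])
  also have "\<dots> = dirac \<mu> E l (mulx j q) \<beta>"
    unfolding dirac_def using lj by (intro sum.cong refl) (simp add: mulx_dunkl_comm)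
  finally show "mulx j (dirac \<mu> E l q) \<beta> = dirac \<mu> E l (mulx j q) \<beta>" .
qed

lemma mulx_pow_dirac_comm:
  "l < j \<Longrightarrow> l \<le> n \<Longrightarrow> (mulx j ^^ r) (dirac \<mu> E l q) = dirac \<mu> E l ((mulx j ^^ r) q)"
  by (induction r) (auto simp: mulx_dirac_comm)

lemma dirac_cmul_anticomm:
  assumes "j \<in> {1..n}" "l < j" shows "dirac \<mu> E l (cmul E j q) = - cmul E j (dirac \<mu> E l q)"
proof -
  have "cmul E i (cmul E j h) = - cmul E j (cmul E i h)" if "i \<in> {1..l}" for i h
    using assms that E_anticomm[of i j] by (auto simp: cmul_def fun_eq_iff)
  then show ?thesis
    using assms unfolding dirac_eq_sum dunkl_cmul[OF assms(1)]
    by (simp add: linear_sum[OF linear_cmul[OF assms(1)]] sum_negf)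
qed

lemma dirac_split: "1 \<le> j \<Longrightarrow> dirac \<mu> E j q = dirac \<mu> E (j - 1) q + cmul E j (dunkl \<mu> j q)"
proof -
  assume "1 \<le> j"
  then have "{1..j} = insert j {1..j - 1}" "j \<notin> {1..j - 1}" by auto
  then show ?thesis by (simp add: dirac_eq_sum add.commute)
qed

lemma ck_step_pow:
  assumes "1 \<le> j" "j \<le> n + 1"
  shows "(ck_step \<mu> E j ^^ r) g = (mulx j ^^ r) ((dirac \<mu> E (j - 1) ^^ r) g)"
proof (induction r)
  case (Suc r)
  then show ?case using assms by (simp add: ck_step_def mulx_pow_dirac_comm)
qed simp

lemma dirac_pow_vanish:
  assumes "l \<le> n" "supp_sat (\<lambda>\<beta>. deg_on {1..l} \<beta> \<le> d) q" "d < r"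
  shows "(dirac \<mu> E l ^^ r) q = 0"
proof -
  have "supp_sat (\<lambda>\<beta>. deg_on {1..l} \<beta> + s \<le> d) ((dirac \<mu> E l ^^ s) q)" for s
  proof (induction s)
    case (Suc s)
    have "supp_sat (\<lambda>\<beta>. deg_on {1..l} \<beta> + Suc s \<le> d) (dirac \<mu> E l ((dirac \<mu> E l ^^ s) q))"
    proof (rule supp_sat_dirac[OF assms(1) Suc])
      fix i \<beta> assume "i \<in> {1..l}" "deg_on {1..l} (\<beta>(i := \<beta> i + 1)) + s \<le> d"
      moreover have "deg_on {1..l} (\<beta>(i := \<beta> i + 1)) + \<beta> i = deg_on {1..l} \<beta> + (\<beta> i + 1)"
        using \<open>i \<in> {1..l}\<close> by (intro deg_on_upd) auto
      ultimately show "deg_on {1..l} \<beta> + Suc s \<le> d" by linarith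
    qed
    then show ?case by simp
  qed (use assms(2) in simp)
  from this[of r] have "supp_sat (\<lambda>_. False) ((dirac \<mu> E l ^^ r) q)"
    by (rule supp_sat_mono) (use assms(3) in linarith)
  then show ?thesis by (rule supp_sat_False)
qed

lemma homog_ck_step:
  assumes "1 \<le> j" "j \<le> n" "homog j d q"
  shows "homog j d (ck_step \<mu> E j q)"
  unfolding homog_iff ck_step_def
proof (intro conjI)
  have q: "fin_supp q" "supp_sat (vars_in {1..j}) q" "supp_sat (\<lambda>\<beta>. deg_on {1..j} \<beta> = d) q"
    using assms(3) by (auto simp: homog_iff)
  show "fin_supp (mulx j (dirac \<mu> E (j - 1) q))"
    using assms q by (intro fin_supp_mulx fin_supp_dirac) auto
  show "supp_sat (vars_in {1..j}) (mulx j (dirac \<mu> E (j - 1) q))"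
  proof (rule supp_sat_mulx)
    show "supp_sat (vars_in {1..j}) (dirac \<mu> E (j - 1) q)"
      using assms by (intro supp_sat_dirac[OF _ q(2)]) (auto simp: vars_in_def split: if_splits)
  qed (use assms in \<open>auto simp: vars_in_def split: if_splits\<close>)
  show "supp_sat (\<lambda>\<beta>. deg_on {1..j} \<beta> = d) (mulx j (dirac \<mu> E (j - 1) q))"
  proof (rule supp_sat_mulx)
    show "supp_sat (\<lambda>\<beta>. deg_on {1..j} \<beta> + 1 = d) (dirac \<mu> E (j - 1) q)"
    proof (rule supp_sat_dirac[OF _ q(3)])
      fix i \<beta> assume i: "i \<in> {1..j - 1}" and h: "deg_on {1..j} (\<beta>(i := \<beta> i + 1)) = d"
      have "deg_on {1..j} (\<beta>(i := \<beta> i + 1)) + \<beta> i = deg_on {1..j} \<beta> + (\<beta> i + 1)"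
        using i by (intro deg_on_upd) auto
      then show "deg_on {1..j} \<beta> + 1 = d" using h by linarith
    qed (use assms in auto)
    fix \<beta> assume b: "1 \<le> \<beta> j" and h: "deg_on {1..j} (\<beta>(j := \<beta> j - 1)) + 1 = d"
    have "deg_on {1..j} (\<beta>(j := \<beta> j - 1)) + \<beta> j = deg_on {1..j} \<beta> + (\<beta> j - 1)"
      using assms(1) by (intro deg_on_upd) auto
    then show "deg_on {1..j} \<beta> = d" using h b by linarith
  qed
qed

lemma homog_cmul: "j \<in> {1..n} \<Longrightarrow> homog l d q \<Longrightarrow> homog l d (cmul E j q)"
  by (simp add: homog_iff fin_supp_cmul supp_sat_cmul)

lemma homog_xvec_pow:
  assumes "l \<le> n" "homog l d h" shows "homog l (d + r) ((xvec E l ^^ r) h)"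
proof (induction r)
  case (Suc r)
  have h: "fin_supp ((xvec E l ^^ r) h)" "supp_sat (vars_in {1..l}) ((xvec E l ^^ r) h)"
    "supp_sat (\<lambda>\<beta>. deg_on {1..l} \<beta> = d + r) ((xvec E l ^^ r) h)"
    using Suc by (auto simp: homog_iff)
  have "supp_sat (vars_in {1..l}) (xvec E l ((xvec E l ^^ r) h))"
  proof (rule supp_sat_xvec[OF assms(1) h(2)])
    fix i \<beta> assume "i \<in> {1..l}" "vars_in {1..l} (\<beta>(i := \<beta> i - 1))"
    then show "vars_in {1..l} \<beta>" unfolding vars_in_def by (metis fun_upd_other)
  qed
  moreover have "supp_sat (\<lambda>\<beta>. deg_on {1..l} \<beta> = d + Suc r) (xvec E l ((xvec E l ^^ r) h))"
  proof (rule supp_sat_xvec[OF assms(1) h(3)])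
    fix i \<beta> assume i: "i \<in> {1..l}" and b: "1 \<le> \<beta> i" and e: "deg_on {1..l} (\<beta>(i := \<beta> i - 1)) = d + r"
    have "deg_on {1..l} (\<beta>(i := \<beta> i - 1)) + \<beta> i = deg_on {1..l} \<beta> + (\<beta> i - 1)"
      using i by (intro deg_on_upd) auto
    then show "deg_on {1..l} \<beta> = d + Suc r" using e b by linarith
  qed
  ultimately show ?case using assms(1) h(1) by (simp add: homog_iff fin_supp_xvec)
qed (use assms(2) in simp)

end

subsection \<open>The Cauchy--Kovalevskaia extension\<close>

definition ck_even_coeff :: "(nat \<Rightarrow> real) \<Rightarrow> nat \<Rightarrow> nat \<Rightarrow> real" where
  "ck_even_coeff \<mu> j m = 1 / (4 ^ m * fact m * Gamma (real m + \<mu> j + 1/2))"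

definition ck_odd_coeff :: "(nat \<Rightarrow> real) \<Rightarrow> nat \<Rightarrow> nat \<Rightarrow> real" where
  "ck_odd_coeff \<mu> j m = 1/2 * (1 / (4 ^ m * fact m * Gamma (real m + \<mu> j + 3/2)))"

definition CK_trunc :: "(nat \<Rightarrow> real) \<Rightarrow> (nat \<Rightarrow> 'v \<Rightarrow> 'v) \<Rightarrow> nat \<Rightarrow> nat \<Rightarrow> 'v::real_vector vpoly \<Rightarrow> 'v vpoly" where
  "CK_trunc \<mu> E j M p = Gamma (\<mu> j + 1/2) *\<^sub>R (\<Sum>m\<le>M. ck_even_coeff \<mu> j m *\<^sub>R (ck_step \<mu> E j ^^ (2*m)) p
       + ck_odd_coeff \<mu> j m *\<^sub>R cmul E j ((ck_step \<mu> E j ^^ (2*m+1)) p))"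

lemma CK_eq_CK_trunc: "CK \<mu> E N j p = CK_trunc \<mu> E j (tdeg N p) p"
  unfolding CK_def CK_trunc_def ck_step_def[abs_def]
  by (simp add: fun_eq_iff sum_fun_apply ck_even_coeff_def ck_odd_coeff_def cmul_def)

text \<open>The two recursions between the coefficients of the CK series that make its Dirac image telescope.\<close>

lemma ck_odd_coeff_dunkl:
  assumes "\<mu> j > 0" shows "ck_odd_coeff \<mu> j m * dunkl_coeff \<mu> j (2*m) = ck_even_coeff \<mu> j m"
proof -
  define c where "c = real m + \<mu> j + 1/2"
  define A where "A = 4 ^ m * fact m * Gamma c"
  have c: "c > 0" unfolding c_def using assms by simp
  have "Gamma (real m + \<mu> j + 3/2) = c * Gamma c"
    using Gamma_plus1[of c] c nonpos_Ints_nonpos[of c] unfolding c_def by (force simp: add.assoc)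
  moreover have A: "A > 0" unfolding A_def using c by (simp add: Gamma_real_pos)
  ultimately have odd: "ck_odd_coeff \<mu> j m = 1 / (2 * c * A)"
    unfolding ck_odd_coeff_def A_def by (simp add: algebra_simps)
  have "dunkl_coeff \<mu> j (2*m) = 2 * c" unfolding dunkl_coeff_even c_def by simp
  moreover have "ck_even_coeff \<mu> j m = 1 / A" unfolding ck_even_coeff_def A_def c_def by simp
  ultimately show ?thesis unfolding odd using A c by (simp add: field_simps)
qed

lemma ck_even_coeff_Suc_dunkl:
  assumes "\<mu> j > 0" shows "ck_even_coeff \<mu> j (Suc k) * dunkl_coeff \<mu> j (2*k+1) = ck_odd_coeff \<mu> j k"
proof -
  define A where "A = 4 ^ k * fact k * Gamma (real k + \<mu> j + 3/2)"
  define K where "K = real k + 1"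
  have A: "A > 0" unfolding A_def using assms by (simp add: Gamma_real_pos)
  have K: "K > 0" unfolding K_def by simp
  have "real (Suc k) + \<mu> j + 1/2 = real k + \<mu> j + 3/2" by simp
  then have even: "ck_even_coeff \<mu> j (Suc k) = 1 / (4 * K * A)"
    unfolding ck_even_coeff_def A_def K_def by (simp add: algebra_simps)
  have odd: "ck_odd_coeff \<mu> j k = 1/2 * (1 / A)" unfolding ck_odd_coeff_def A_def by simp
  have "dunkl_coeff \<mu> j (2*k+1) = 2 * K" unfolding dunkl_coeff_odd K_def by simp
  then show ?thesis unfolding even odd using A K by (simp add: field_simps)
qed

context dunkl_clifford
begin

lemma linear_CK_trunc: "j \<in> {1..n} \<Longrightarrow> linear (CK_trunc \<mu> E j M)"
proof -
  assume j: "j \<in> {1..n}"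
  have step: "linear (ck_step \<mu> E j ^^ r)" for r
    unfolding ck_step_def[abs_def] using j
    by (intro linear_funpow linear_compose[OF linear_dirac linear_mulx, unfolded o_def]) auto
  have "linear (\<lambda>p. Gamma (\<mu> j + 1/2) *\<^sub>R (\<Sum>m\<le>M. ck_even_coeff \<mu> j m *\<^sub>R (ck_step \<mu> E j ^^ (2*m)) p
       + ck_odd_coeff \<mu> j m *\<^sub>R cmul E j ((ck_step \<mu> E j ^^ (2*m+1)) p)))"
    using step linear_cmul[OF j]
    by (intro linear_compose_scale_right linear_compose_sum ballI linear_compose_add
        linear_compose[unfolded o_def, OF step linear_cmul[OF j]]) auto
  then show ?thesis unfolding CK_trunc_def[abs_def] .
qed

lemma CK_trunc_restrict:
  assumes j: "j \<in> {1..n}" and b: "\<beta> j = 0"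
  shows "CK_trunc \<mu> E j M g \<beta> = g \<beta>"
proof -
  have vanish: "(ck_step \<mu> E j ^^ Suc r) q \<beta> = 0" for r q
    by (simp add: ck_step_def mulx_def b)
  have "(ck_step \<mu> E j ^^ (2*m)) g \<beta> = 0" if "m \<noteq> 0" for m
    using vanish[of "2*m - 1" g] that by (simp add: Suc_diff_1)
  then have series_term: "ck_even_coeff \<mu> j m *\<^sub>R (ck_step \<mu> E j ^^ (2*m)) g \<beta>
      + ck_odd_coeff \<mu> j m *\<^sub>R E j ((ck_step \<mu> E j ^^ (2*m+1)) g \<beta>)
      = (if m = 0 then ck_even_coeff \<mu> j 0 *\<^sub>R g \<beta> else 0)" for m
    using vanish[of "2*m"] E_zero[OF j] by auto
  have "CK_trunc \<mu> E j M g \<beta> = Gamma (\<mu> j + 1/2) *\<^sub>R (\<Sum>m\<le>M. ck_even_coeff \<mu> j m *\<^sub>R (ck_step \<mu> E j ^^ (2*m)) g \<beta>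
       + ck_odd_coeff \<mu> j m *\<^sub>R E j ((ck_step \<mu> E j ^^ (2*m+1)) g \<beta>))"
    by (simp add: CK_trunc_def sum_fun_apply cmul_def del: funpow.simps)
  also have "\<dots> = Gamma (\<mu> j + 1/2) *\<^sub>R (ck_even_coeff \<mu> j 0 *\<^sub>R g \<beta>)"
    unfolding series_term by (simp add: sum.delta)
  also have "\<dots> = g \<beta>"
  proof -
    have "\<mu> j > 0" using mu_pos j by auto
    then have "Gamma (\<mu> j + 1/2) > 0" by (intro Gamma_real_pos) simp
    then show ?thesis by (simp add: ck_even_coeff_def)
  qed
  finally show ?thesis .
qed

lemma homog_CK_trunc: "j \<in> {1..n} \<Longrightarrow> homog j d g \<Longrightarrow> homog j d (CK_trunc \<mu> E j M g)"
proof -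
  assume j: "j \<in> {1..n}" and g: "homog j d g"
  have step: "homog j d ((ck_step \<mu> E j ^^ r) g)" for r
    using g j by (induction r) (auto intro: homog_ck_step)
  have "CK_trunc \<mu> E j M g \<in> {p. homog j d p}"
    unfolding CK_trunc_def using subspace_homog step j
    by (intro real_vector.subspace_scale real_vector.subspace_sum real_vector.subspace_add)
      (auto intro: homog_cmul simp del: funpow.simps)
  then show ?thesis by simp
qed

lemma CK_trunc_extend:
  assumes j: "j \<in> {1..n}" and van: "\<And>r. d < r \<Longrightarrow> (dirac \<mu> E (j-1) ^^ r) g = 0"
    and "d \<le> M0" "M0 \<le> M"
  shows "CK_trunc \<mu> E j M g = CK_trunc \<mu> E j M0 g"
proof -
  have step_van: "(ck_step \<mu> E j ^^ r) g = 0" if "d < r" for r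
  proof -
    have "(ck_step \<mu> E j ^^ r) g = (mulx j ^^ r) ((dirac \<mu> E (j-1) ^^ r) g)"
      using j by (intro ck_step_pow) auto
    then show ?thesis using van[OF that] linear_0[OF linear_funpow[OF linear_mulx]] by simp
  qed
  let ?t = "\<lambda>m. ck_even_coeff \<mu> j m *\<^sub>R (ck_step \<mu> E j ^^ (2*m)) g
      + ck_odd_coeff \<mu> j m *\<^sub>R cmul E j ((ck_step \<mu> E j ^^ (2*m+1)) g)"
  have "sum ?t {..M} = sum ?t {..M0}"
  proof (rule sum.mono_neutral_right)
    show "\<forall>m\<in>{..M} - {..M0}. ?t m = 0"
    proof
      fix m assume "m \<in> {..M} - {..M0}"
      then have "d < 2*m" "d < 2*m+1" using assms(3) by auto
      then have "(ck_step \<mu> E j ^^ (2*m)) g = 0" "(ck_step \<mu> E j ^^ (2*m+1)) g = 0"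
        using step_van by blast+
      then show "?t m = 0" using linear_0[OF linear_cmul[OF j]] by simp
    qed
  qed (use assms in auto)
  then show ?thesis unfolding CK_trunc_def by simp
qed

lemma CK_as_CK_trunc:
  assumes j: "j \<in> {1..n}" and f: "fin_supp q" and M: "tdeg n q \<le> M"
  shows "CK \<mu> E n j q = CK_trunc \<mu> E j M q"
proof -
  have deg: "supp_sat (\<lambda>\<beta>. deg_on {1..j-1} \<beta> \<le> tdeg n q) q"
    using j by (intro supp_sat_deg_le_tdeg[OF f]) auto
  have "CK_trunc \<mu> E j M q = CK_trunc \<mu> E j (tdeg n q) q"
    using j deg by (intro CK_trunc_extend[OF j _ order.refl M] dirac_pow_vanish) auto
  then show ?thesis by (simp add: CK_eq_CK_trunc)
qed

lemma CK_sum: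
  assumes j: "j \<in> {1..n}" and fA: "finite A" and f: "\<And>x. x \<in> A \<Longrightarrow> fin_supp (p x)"
  shows "CK \<mu> E n j (\<Sum>x\<in>A. c x *\<^sub>R p x) = (\<Sum>x\<in>A. c x *\<^sub>R CK \<mu> E n j (p x))"
proof -
  define q where "q = (\<Sum>x\<in>A. c x *\<^sub>R p x)"
  define M where "M = max (tdeg n q) (Max (insert 0 ((\<lambda>x. tdeg n (p x)) ` A)))"
  have "fin_supp q" unfolding q_def using f by (intro fin_supp_sum fin_supp_scale) auto
  then have "CK \<mu> E n j q = CK_trunc \<mu> E j M q" using j by (intro CK_as_CK_trunc) (auto simp: M_def)
  also have "\<dots> = (\<Sum>x\<in>A. c x *\<^sub>R CK_trunc \<mu> E j M (p x))"
    unfolding q_def using linear_CK_trunc[OF j] by (simp add: linear_sum linear_scale)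
  also have "\<dots> = (\<Sum>x\<in>A. c x *\<^sub>R CK \<mu> E n j (p x))"
  proof (rule sum.cong[OF refl])
    fix x assume x: "x \<in> A"
    have "tdeg n (p x) \<le> M" unfolding M_def using fA x by (intro max.coboundedI2 Max_ge) auto
    then show "c x *\<^sub>R CK_trunc \<mu> E j M (p x) = c x *\<^sub>R CK \<mu> E n j (p x)"
      using j f[OF x] by (subst CK_as_CK_trunc) auto
  qed
  finally show ?thesis unfolding q_def .
qed

lemma dirac_mulx_pow_hyperplane:
  assumes j: "2 \<le> j" "j \<le> n" and q: "supp_sat (\<lambda>\<beta>. \<beta> j = 0) q"
  shows "dirac \<mu> E j ((mulx j ^^ r) q) = (mulx j ^^ r) (dirac \<mu> E (j - 1) q)
    + (if r = 0 then 0 else dunkl_coeff \<mu> j (r - 1) *\<^sub>R cmul E j ((mulx j ^^ (r - 1)) q))"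
proof -
  have jn: "j \<in> {1..n}" using j by auto
  have "dirac \<mu> E j ((mulx j ^^ r) q)
      = (mulx j ^^ r) (dirac \<mu> E (j - 1) q) + cmul E j (dunkl \<mu> j ((mulx j ^^ r) q))"
    using j by (simp add: dirac_split[of j] mulx_pow_dirac_comm)
  moreover have "dunkl \<mu> j ((mulx j ^^ r) q)
      = (if r = 0 then 0 else dunkl_coeff \<mu> j (r - 1) *\<^sub>R (mulx j ^^ (r - 1)) q)"
    using dunkl_hyperplane[OF q] dunkl_mulx_pow_hyperplane[OF q, of _ "r - 1"]
    by (cases r) (simp_all del: funpow.simps)
  ultimately show ?thesis
    using linear_0[OF linear_cmul[OF jn]] linear_scale[OF linear_cmul[OF jn]] by (simp del: funpow.simps)
qed

lemma dirac_cmul_mulx_pow_hyperplane: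
  assumes j: "2 \<le> j" "j \<le> n" and q: "supp_sat (\<lambda>\<beta>. \<beta> j = 0) q"
  shows "dirac \<mu> E j (cmul E j ((mulx j ^^ Suc r) q))
    = - cmul E j ((mulx j ^^ Suc r) (dirac \<mu> E (j - 1) q)) - dunkl_coeff \<mu> j r *\<^sub>R (mulx j ^^ r) q"
proof -
  have jn: "j \<in> {1..n}" using j by auto
  have "dirac \<mu> E j (cmul E j ((mulx j ^^ Suc r) q))
      = - cmul E j (dirac \<mu> E (j - 1) ((mulx j ^^ Suc r) q))
        + cmul E j (cmul E j (dunkl \<mu> j ((mulx j ^^ Suc r) q)))"
    using j by (simp add: dirac_split[of j] dirac_cmul_anticomm[OF jn] dunkl_cmul[OF jn] del: funpow.simps)
  then show ?thesis
    using j by (simp add: cmul_square[OF jn] mulx_pow_dirac_comm dunkl_mulx_pow_hyperplane[OF q] del: funpow.simps)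
qed

lemma dirac_ck_series_term:
  assumes j: "2 \<le> j" "j \<le> n" and Q_hyp: "\<And>r. supp_sat (\<lambda>\<beta>. \<beta> j = 0) (Q r)"
    and Q_Suc: "\<And>r. dirac \<mu> E (j - 1) (Q r) = Q (Suc r)"
  defines "f \<equiv> \<lambda>m. ck_odd_coeff \<mu> j m *\<^sub>R cmul E j ((mulx j ^^ (2*m+1)) (Q (2*m+2)))"
  shows "dirac \<mu> E j (ck_even_coeff \<mu> j m *\<^sub>R (mulx j ^^ (2*m)) (Q (2*m))
      + ck_odd_coeff \<mu> j m *\<^sub>R cmul E j ((mulx j ^^ (2*m+1)) (Q (2*m+1))))
    = (if m = 0 then 0 else f (m - 1)) - f m"
proof -
  have mj: "\<mu> j > 0" using mu_pos j by auto
  have lin: "linear (dirac \<mu> E j)" using j by (intro linear_dirac) auto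
  have odd: "dirac \<mu> E j (cmul E j ((mulx j ^^ (2*m+1)) (Q (2*m+1))))
      = - cmul E j ((mulx j ^^ (2*m+1)) (Q (2*m+2))) - dunkl_coeff \<mu> j (2*m) *\<^sub>R (mulx j ^^ (2*m)) (Q (2*m+1))"
    using dirac_cmul_mulx_pow_hyperplane[OF j Q_hyp, of "2*m" "2*m+1"] unfolding Q_Suc by simp
  have even: "dirac \<mu> E j ((mulx j ^^ (2*m)) (Q (2*m))) = (mulx j ^^ (2*m)) (Q (2*m+1))
      + (if m = 0 then 0 else dunkl_coeff \<mu> j (2*m-1) *\<^sub>R cmul E j ((mulx j ^^ (2*m-1)) (Q (2*m))))"
    using dirac_mulx_pow_hyperplane[OF j Q_hyp, of "2*m" "2*m"] unfolding Q_Suc by (simp del: funpow.simps)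
  have "dirac \<mu> E j (ck_even_coeff \<mu> j m *\<^sub>R (mulx j ^^ (2*m)) (Q (2*m))
      + ck_odd_coeff \<mu> j m *\<^sub>R cmul E j ((mulx j ^^ (2*m+1)) (Q (2*m+1))))
    = ck_even_coeff \<mu> j m *\<^sub>R dirac \<mu> E j ((mulx j ^^ (2*m)) (Q (2*m)))
      + ck_odd_coeff \<mu> j m *\<^sub>R dirac \<mu> E j (cmul E j ((mulx j ^^ (2*m+1)) (Q (2*m+1))))"
    by (simp only: linear_add[OF lin] linear_scale[OF lin])
  also have "\<dots> = ck_even_coeff \<mu> j m *\<^sub>R
      (if m = 0 then 0 else dunkl_coeff \<mu> j (2*m-1) *\<^sub>R cmul E j ((mulx j ^^ (2*m-1)) (Q (2*m)))) - f m"
    unfolding even odd f_def ck_odd_coeff_dunkl[of \<mu> j m, OF mj, symmetric]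
    by (simp add: algebra_simps del: funpow.simps)
  also have "\<dots> = (if m = 0 then 0 else f (m - 1)) - f m"
  proof (cases m)
    case (Suc k)
    have "2*m-1 = 2*k+1" "2*m = 2*k+2" using Suc by auto
    then show ?thesis using ck_even_coeff_Suc_dunkl[of \<mu> j k, OF mj] Suc by (simp add: f_def)
  qed simp
  finally show ?thesis .
qed

lemma CK_trunc_monogenic:
  assumes j: "2 \<le> j" "j \<le> n" and g0: "supp_sat (\<lambda>\<beta>. \<beta> j = 0) g"
    and van: "(dirac \<mu> E (j-1) ^^ (2*M+2)) g = 0"
  shows "dirac \<mu> E j (CK_trunc \<mu> E j M g) = 0"
proof -
  have jn: "j \<in> {1..n}" using j by auto
  have lin: "linear (dirac \<mu> E j)" using j by (intro linear_dirac) auto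
  define Q where "Q r = (dirac \<mu> E (j-1) ^^ r) g" for r
  define f where "f m = ck_odd_coeff \<mu> j m *\<^sub>R cmul E j ((mulx j ^^ (2*m+1)) (Q (2*m+2)))" for m
  have Q_Suc: "dirac \<mu> E (j-1) (Q r) = Q (Suc r)" for r by (simp add: Q_def)
  have Q_hyp: "supp_sat (\<lambda>\<beta>. \<beta> j = 0) (Q r)" for r
  proof (induction r)
    case (Suc r)
    then show ?case unfolding Q_Suc[symmetric]
      using j by (intro supp_sat_dirac[OF _ Suc]) (auto split: if_splits)
  qed (simp add: Q_def g0)
  have "CK_trunc \<mu> E j M g = Gamma (\<mu> j + 1/2) *\<^sub>R (\<Sum>m\<le>M.
      ck_even_coeff \<mu> j m *\<^sub>R (mulx j ^^ (2*m)) (Q (2*m))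
      + ck_odd_coeff \<mu> j m *\<^sub>R cmul E j ((mulx j ^^ (2*m+1)) (Q (2*m+1))))"
    unfolding CK_trunc_def Q_def using j by (subst (1 2) ck_step_pow) auto
  moreover have "dirac \<mu> E j (ck_even_coeff \<mu> j m *\<^sub>R (mulx j ^^ (2*m)) (Q (2*m))
      + ck_odd_coeff \<mu> j m *\<^sub>R cmul E j ((mulx j ^^ (2*m+1)) (Q (2*m+1))))
    = (if m = 0 then 0 else f (m - 1)) - f m" for m
    using dirac_ck_series_term[where Q = Q, OF j Q_hyp Q_Suc] unfolding f_def[symmetric] .
  ultimately have "dirac \<mu> E j (CK_trunc \<mu> E j M g)
      = Gamma (\<mu> j + 1/2) *\<^sub>R (\<Sum>m\<le>M. (if m = 0 then 0 else f (m - 1)) - f m)"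
    by (simp only: linear_scale[OF lin] linear_sum[OF lin])
  also have "(\<Sum>m\<le>N. (if m = 0 then 0 else f (m - 1)) - f m) = - f N" for N
    by (induction N) auto
  also have "Q (2*M+2) = 0" using van by (simp add: Q_def)
  then have "f M = 0" unfolding f_def
    by (simp only: linear_0[OF linear_funpow[OF linear_mulx]] linear_0[OF linear_cmul[OF jn]] scaleR_zero_right)
  finally show ?thesis by (simp add: fun_eq_iff)
qed

lemma CK_restrict: "j \<in> {1..n} \<Longrightarrow> \<beta> j = 0 \<Longrightarrow> CK \<mu> E N j q \<beta> = q \<beta>"
  unfolding CK_eq_CK_trunc by (rule CK_trunc_restrict)

lemma CK_eq_0_imp:
  assumes "j \<in> {1..n}" "supp_sat (\<lambda>\<beta>. \<beta> j = 0) q" "CK \<mu> E N j q = 0"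
  shows "q = 0"
proof
  fix \<beta> :: "nat \<Rightarrow> nat"
  show "q \<beta> = 0 \<beta>"
    using assms CK_restrict[OF assms(1), of \<beta> N q] by (cases "\<beta> j = 0") (auto simp: supp_sat_def)
qed

lemma homog_CK: "j \<in> {1..n} \<Longrightarrow> homog j d q \<Longrightarrow> homog j d (CK \<mu> E N j q)"
  unfolding CK_eq_CK_trunc by (rule homog_CK_trunc)

lemma CK_monogenic:
  assumes j: "2 \<le> j" "j \<le> n" and f: "fin_supp q" and s: "supp_sat (\<lambda>\<beta>. \<beta> j = 0) q"
  shows "dirac \<mu> E j (CK \<mu> E n j q) = 0"
proof -
  have "supp_sat (\<lambda>\<beta>. deg_on {1..j-1} \<beta> \<le> tdeg n q) q"
    using j by (intro supp_sat_deg_le_tdeg[OF f]) auto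
  then have "(dirac \<mu> E (j-1) ^^ (2 * tdeg n q + 2)) q = 0"
    using j by (intro dirac_pow_vanish) auto
  then show ?thesis unfolding CK_eq_CK_trunc using j s by (intro CK_trunc_monogenic) auto
qed

lemma CK_homog_monogenic:
  assumes j: "2 \<le> j" "j \<le> n" and p: "homog (j - 1) d p"
  shows "homog j d (CK \<mu> E n j p) \<and> dirac \<mu> E j (CK \<mu> E n j p) = 0"
proof
  show "homog j d (CK \<mu> E n j p)"
    using j homog_vars_mono[OF p] by (intro homog_CK) auto
  show "dirac \<mu> E j (CK \<mu> E n j p) = 0"
    using j p homog_hyperplane[OF p] by (intro CK_monogenic) (auto simp: homog_iff)
qed

end

subsection \<open>Uniqueness of extensions and the Fischer decomposition\<close>

context dunkl_clifford
begin

lemma dirac_kernel_unique: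
  assumes j: "1 \<le> j" "j \<le> n" and D: "dirac \<mu> E j f = 0" and z: "\<And>\<beta>. \<beta> j = 0 \<Longrightarrow> f \<beta> = 0"
  shows "f = 0"
proof -
  have jn: "j \<in> {1..n}" using j by auto
  have "f \<beta> = 0" if "\<beta> j = a" for a \<beta>
    using that
  proof (induction a arbitrary: \<beta>)
    case (Suc a)
    define \<gamma> where "\<gamma> = \<beta>(j := a)"
    have \<gamma>: "\<gamma> j = a" "\<gamma>(j := \<gamma> j + 1) = \<beta>" using Suc.prems by (auto simp: \<gamma>_def)
    have "dirac \<mu> E (j - 1) f \<gamma> = 0"
      unfolding dirac_def using Suc.IH \<gamma>(1) j by (intro sum.neutral ballI) (auto simp: dunkl_eq E_zero)
    moreover have "dirac \<mu> E j f \<gamma> = dirac \<mu> E (j - 1) f \<gamma> + E j (dunkl \<mu> j f \<gamma>)"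
      using dirac_split[OF j(1), of f] by (simp add: cmul_def)
    ultimately have "E j (dunkl \<mu> j f \<gamma>) = 0" using D by simp
    then have "E j (E j (dunkl \<mu> j f \<gamma>)) = 0" using E_zero[OF jn] by simp
    then have "dunkl \<mu> j f \<gamma> = 0" using E_square[OF jn] by simp
    then have "dunkl_coeff \<mu> j a *\<^sub>R f \<beta> = 0" using \<gamma> by (simp add: dunkl_eq)
    moreover have "dunkl_coeff \<mu> j a > 0" using mu_nonneg[OF jn] by (rule dunkl_coeff_pos)
    ultimately show ?case by simp
  qed (use z in auto)
  then show ?thesis by (auto simp: fun_eq_iff)
qed

definition dim_mu :: "nat \<Rightarrow> real" where
  "dim_mu l = real l + 2 * (\<Sum>i=1..l. \<mu> i)"

lemma anticomm_coordinate:
  assumes "l \<le> n" "i \<in> {1..l}"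
  shows "(\<Sum>k=1..l. E i (E k (mulx i (dunkl \<mu> k h) \<beta>)) + E k (E i (dunkl \<mu> k (mulx i h) \<beta>)))
    = - ((real (2 * \<beta> i + 1) + 2 * \<mu> i) *\<^sub>R h \<beta>)"
proof -
  have i: "i \<in> {1..n}" using assms by auto
  have off_diag: "E i (E k (mulx i (dunkl \<mu> k h) \<beta>)) + E k (E i (dunkl \<mu> k (mulx i h) \<beta>)) = 0"
    if "k \<in> {1..l} - {i}" for k
    using that assms E_anticomm[of k i] mulx_dunkl_comm[of k i \<mu> h] by auto
  have "(\<Sum>k=1..l. E i (E k (mulx i (dunkl \<mu> k h) \<beta>)) + E k (E i (dunkl \<mu> k (mulx i h) \<beta>)))
      = E i (E i (mulx i (dunkl \<mu> i h) \<beta>)) + E i (E i (dunkl \<mu> i (mulx i h) \<beta>))"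
    using assms(2) off_diag by (simp add: sum.remove)
  also have "\<dots> = - (mulx i (dunkl \<mu> i h) \<beta> + dunkl \<mu> i (mulx i h) \<beta>)"
    using E_square[OF i] by simp
  finally show ?thesis unfolding mulx_dunkl_add_dunkl_mulx .
qed

lemma xvec_dirac_anticomm_apply:
  assumes ln: "l \<le> n"
  shows "(xvec E l (dirac \<mu> E l h) + dirac \<mu> E l (xvec E l h)) \<beta>
    = - ((\<Sum>i=1..l. real (2 * \<beta> i + 1) + 2 * \<mu> i) *\<^sub>R h \<beta>)"
proof -
  have Ein: "i \<in> {1..l} \<Longrightarrow> i \<in> {1..n}" for i using ln by auto
  have "xvec E l (dirac \<mu> E l h) \<beta> = (\<Sum>i=1..l. \<Sum>k=1..l. E i (E k (mulx i (dunkl \<mu> k h) \<beta>)))"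
    unfolding xvec_def
  proof (rule sum.cong[OF refl])
    fix i assume i: "i \<in> {1..l}"
    have "mulx i (dirac \<mu> E l h) \<beta> = (\<Sum>k=1..l. E k (mulx i (dunkl \<mu> k h) \<beta>))"
      using Ein by (auto simp: mulx_def dirac_def E_zero intro!: sum.neutral[symmetric])
    then show "E i (mulx i (dirac \<mu> E l h) \<beta>) = (\<Sum>k=1..l. E i (E k (mulx i (dunkl \<mu> k h) \<beta>)))"
      using E_sum[OF Ein[OF i]] by simp
  qed
  moreover have "dirac \<mu> E l (xvec E l h) \<beta> = (\<Sum>i=1..l. \<Sum>k=1..l. E k (E i (dunkl \<mu> k (mulx i h) \<beta>)))"
  proof -
    have "dunkl \<mu> k (xvec E l h) \<beta> = (\<Sum>i=1..l. E i (dunkl \<mu> k (mulx i h) \<beta>))" for k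
      unfolding dunkl_eq xvec_def scaleR_sum_right using Ein by (intro sum.cong refl) (auto simp: E_scale)
    then have "dirac \<mu> E l (xvec E l h) \<beta> = (\<Sum>k=1..l. \<Sum>i=1..l. E k (E i (dunkl \<mu> k (mulx i h) \<beta>)))"
      unfolding dirac_def using Ein by (intro sum.cong refl) (simp add: E_sum)
    then show ?thesis by (rule trans) (rule sum.swap)
  qed
  ultimately have "(xvec E l (dirac \<mu> E l h) + dirac \<mu> E l (xvec E l h)) \<beta>
      = (\<Sum>i=1..l. - ((real (2 * \<beta> i + 1) + 2 * \<mu> i) *\<^sub>R h \<beta>))"
    using anticomm_coordinate[OF ln] by (simp add: sum.distrib[symmetric])
  then show ?thesis by (simp add: sum_negf scaleR_sum_left)
qed

lemma xvec_dirac_anticomm: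
  assumes "l \<le> n" and "homog l d h"
  shows "xvec E l (dirac \<mu> E l h) + dirac \<mu> E l (xvec E l h) = - (2 * real d + dim_mu l) *\<^sub>R h"
proof
  fix \<beta> :: "nat \<Rightarrow> nat"
  have "(\<Sum>i=1..l. real (2 * \<beta> i + 1) + 2 * \<mu> i) = 2 * real d + dim_mu l" if "h \<beta> \<noteq> 0"
  proof -
    have "(\<Sum>i=1..l. real (\<beta> i)) = real d"
      using that assms(2) of_nat_sum[of \<beta> "{1..l}"] by (auto simp: homog_iff supp_sat_def deg_on_def)
    then show ?thesis by (simp add: dim_mu_def sum.distrib sum_distrib_left[symmetric])
  qed
  then show "(xvec E l (dirac \<mu> E l h) + dirac \<mu> E l (xvec E l h)) \<beta> = (- (2 * real d + dim_mu l) *\<^sub>R h) \<beta>"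
    unfolding xvec_dirac_anticomm_apply[OF assms(1)] by (cases "h \<beta> = 0") (auto simp: algebra_simps)
qed

definition fischer_coeff :: "nat \<Rightarrow> nat \<Rightarrow> nat \<Rightarrow> real" where
  "fischer_coeff l m i = (if even i then - real i else - (2 * real m + real (i - 1) + dim_mu l))"

lemma fischer_coeff_nonzero: "1 \<le> l \<Longrightarrow> l \<le> n \<Longrightarrow> i \<noteq> 0 \<Longrightarrow> fischer_coeff l m i \<noteq> 0"
proof -
  assume l: "1 \<le> l" "l \<le> n" and "i \<noteq> 0"
  have "(\<Sum>i=1..l. \<mu> i) \<ge> 0" using l mu_nonneg by (intro sum_nonneg) auto
  then have "dim_mu l > 0" unfolding dim_mu_def using l by simp
  then show ?thesis using \<open>i \<noteq> 0\<close> unfolding fischer_coeff_def by (auto split: if_splits)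
qed

lemma dirac_xvec_pow:
  assumes ln: "l \<le> n" and gd: "homog l m g" and gm: "dirac \<mu> E l g = 0"
  shows "dirac \<mu> E l ((xvec E l ^^ Suc i) g) = fischer_coeff l m (Suc i) *\<^sub>R (xvec E l ^^ i) g"
proof (induction i)
  have linx: "linear (xvec E l)" using ln by (rule linear_xvec)
  case 0
  have ac: "xvec E l (dirac \<mu> E l g) + dirac \<mu> E l (xvec E l g) = - (2 * real m + dim_mu l) *\<^sub>R g"
    using xvec_dirac_anticomm[OF ln gd] by simp
  have "xvec E l (dirac \<mu> E l g) = 0" unfolding gm by (rule linear_0[OF linx])
  then have "dirac \<mu> E l (xvec E l g) = - (2 * real m + dim_mu l) *\<^sub>R g" using ac by simp
  moreover have "fischer_coeff l m (Suc 0) = - (2 * real m + dim_mu l)" by (simp add: fischer_coeff_def)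
  ultimately show ?case by simp
next
  case (Suc i)
  have linx: "linear (xvec E l)" using ln by (rule linear_xvec)
  define h where "h = (xvec E l ^^ Suc i) g"
  have hd: "homog l (m + Suc i) h" unfolding h_def by (rule homog_xvec_pow[OF ln gd])
  have ac: "xvec E l (dirac \<mu> E l h) + dirac \<mu> E l (xvec E l h) = - (2 * real (m + Suc i) + dim_mu l) *\<^sub>R h"
    by (rule xvec_dirac_anticomm[OF ln hd])
  have "xvec E l (dirac \<mu> E l h) = fischer_coeff l m (Suc i) *\<^sub>R xvec E l ((xvec E l ^^ i) g)"
    unfolding h_def Suc.IH by (rule linear_scale[OF linx])
  also have "xvec E l ((xvec E l ^^ i) g) = h" by (simp add: h_def)
  finally have e1: "xvec E l (dirac \<mu> E l h) = fischer_coeff l m (Suc i) *\<^sub>R h" .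
  have "dirac \<mu> E l (xvec E l h) = - (2 * real (m + Suc i) + dim_mu l) *\<^sub>R h - xvec E l (dirac \<mu> E l h)"
    using ac by (metis add_diff_cancel_left')
  then have "dirac \<mu> E l (xvec E l h) = - (2 * real (m + Suc i) + dim_mu l) *\<^sub>R h - fischer_coeff l m (Suc i) *\<^sub>R h"
    unfolding e1 .
  also have "\<dots> = (- (2 * real (m + Suc i) + dim_mu l) - fischer_coeff l m (Suc i)) *\<^sub>R h"
    by (simp only: scaleR_diff_left)
  also have "- (2 * real (m + Suc i) + dim_mu l) - fischer_coeff l m (Suc i) = fischer_coeff l m (Suc (Suc i))"
    by (auto simp: fischer_coeff_def)
  finally show ?case by (simp add: h_def)
qed

text \<open>Applying \<open>D\<close> kills \<open>g\<^sub>0\<close> and lowers every other term by one power of \<open>x\<close> with a nonzero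
  factor, so induction on \<open>K\<close> applies to the shifted sequence.\<close>

lemma fischer_sum_eq_0:
  assumes l: "1 \<le> l" "l \<le> n"
  shows "(\<forall>i\<le>K. homog l (m i) (g i) \<and> dirac \<mu> E l (g i) = 0)
    \<Longrightarrow> (\<Sum>i\<le>K. (xvec E l ^^ i) (g i)) = 0 \<Longrightarrow> \<forall>i\<le>K. g i = 0"
proof (induction K arbitrary: g m)
  case 0 then show ?case by simp
next
  case (Suc K)
  have linD: "linear (dirac \<mu> E l)" using l by (intro linear_dirac) auto
  have linX: "linear (xvec E l ^^ i)" for i using l by (intro linear_funpow linear_xvec) auto
  define c where "c i = fischer_coeff l (m (Suc i)) (Suc i)" for i
  define g' where "g' i = c i *\<^sub>R g (Suc i)" for i
  have S: "(\<Sum>i\<le>Suc K. (xvec E l ^^ i) (g i)) = g 0 + (\<Sum>i\<le>K. (xvec E l ^^ Suc i) (g (Suc i)))"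
    by (subst sum.atMost_Suc_shift) simp
  have "dirac \<mu> E l (\<Sum>i\<le>Suc K. (xvec E l ^^ i) (g i)) = 0" by (simp only: Suc.prems(2) linear_0[OF linD])
  then have "dirac \<mu> E l (g 0) + (\<Sum>i\<le>K. dirac \<mu> E l ((xvec E l ^^ Suc i) (g (Suc i)))) = 0"
    unfolding S linear_add[OF linD] linear_sum[OF linD] .
  moreover have "dirac \<mu> E l (g 0) = 0" using Suc.prems(1) by auto
  moreover have "dirac \<mu> E l ((xvec E l ^^ Suc i) (g (Suc i))) = (xvec E l ^^ i) (g' i)" if "i \<le> K" for i
  proof -
    have "homog l (m (Suc i)) (g (Suc i))" "dirac \<mu> E l (g (Suc i)) = 0"
      using Suc.prems(1) that by auto
    then have "dirac \<mu> E l ((xvec E l ^^ Suc i) (g (Suc i))) = c i *\<^sub>R (xvec E l ^^ i) (g (Suc i))"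
      using dirac_xvec_pow[OF l(2)] unfolding c_def by blast
    then show ?thesis unfolding g'_def linear_scale[OF linX] .
  qed
  ultimately have Z: "(\<Sum>i\<le>K. (xvec E l ^^ i) (g' i)) = 0" by simp
  have P: "\<forall>i\<le>K. homog l (m (Suc i)) (g' i) \<and> dirac \<mu> E l (g' i) = 0"
    using Suc.prems(1) unfolding g'_def by (auto intro: homog_scale simp: linear_scale[OF linD])
  have g'0: "\<forall>i\<le>K. g' i = 0" by (rule Suc.IH[OF P Z])
  have gS: "g (Suc i) = 0" if "i \<le> K" for i
  proof -
    have "c i \<noteq> 0" unfolding c_def using l by (intro fischer_coeff_nonzero) auto
    then show ?thesis using g'0 that unfolding g'_def by auto
  qed
  have "(\<Sum>i\<le>K. (xvec E l ^^ Suc i) (g (Suc i))) = 0"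
    using gS linear_0[OF linX] linear_0[OF linear_xvec[OF l(2)]] by (intro sum.neutral) auto
  then have "(\<Sum>i\<le>Suc K. (xvec E l ^^ i) (g i)) = g 0" unfolding S by (simp only: add_0_right)
  then have "g 0 = 0" using Suc.prems(2) by (simp only:)
  then show ?case using gS by (metis Suc_le_mono not0_implies_Suc)
qed

end

subsection \<open>Independence and spanning of the iterated extensions\<close>

lemma chain_cong:
  "(\<And>i. i \<in> {1..l} \<Longrightarrow> jj i = jj' i) \<Longrightarrow> chain \<mu> E N jj v l = chain \<mu> E N jj' v l"
  by (induction \<mu> E N jj v l rule: chain.induct) auto

lemma chain_Suc:
  "1 \<le> l \<Longrightarrow> chain \<mu> E N J v (Suc l) = (xvec E (Suc l) ^^ J (Suc l)) (CK \<mu> E N (Suc l) (chain \<mu> E N J v l))"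
  by (cases l) auto

context dunkl_clifford
begin

lemma homog_chain: "1 \<le> l \<Longrightarrow> l \<le> n \<Longrightarrow> homog l (\<Sum>i=1..l. jj i) (chain \<mu> E N jj v l)"
proof (induction l rule: nat_induct_at_least)
  case base
  show ?case by (auto simp: homog_iff_supp_exps exps_def mono_def)
next
  case (Suc l)
  then have "homog (Suc l) (\<Sum>i=1..l. jj i) (chain \<mu> E N jj v l)" by (auto intro: homog_vars_mono)
  then have "homog (Suc l) (\<Sum>i=1..l. jj i) (CK \<mu> E N (Suc l) (chain \<mu> E N jj v l))"
    using Suc.prems by (intro homog_CK) auto
  from homog_xvec_pow[OF Suc.prems this, of "jj (Suc l)"]
  show ?case unfolding chain_Suc[OF Suc.hyps] by simp
qed

lemma indep_fam_CK:
  assumes j: "j \<in> {1..n}" and indep: "indep_fam G I"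
    and G: "\<And>x. x \<in> I \<Longrightarrow> fin_supp (G x) \<and> supp_sat (\<lambda>\<beta>. \<beta> j = 0) (G x)"
  shows "indep_fam (\<lambda>x. CK \<mu> E n j (G x)) I"
  unfolding indep_fam_def
proof (intro conjI allI impI ballI)
  show fin: "finite I" using indep by (simp add: indep_fam_def)
  fix c x assume Z: "(\<Sum>x\<in>I. c x *\<^sub>R CK \<mu> E n j (G x)) = 0" and x: "x \<in> I"
  have "CK \<mu> E n j (\<Sum>x\<in>I. c x *\<^sub>R G x) = 0"
    using Z fin G by (simp add: CK_sum[OF j])
  moreover have "supp_sat (\<lambda>\<beta>. \<beta> j = 0) (\<Sum>x\<in>I. c x *\<^sub>R G x)"
    using G by (intro supp_sat_sum supp_sat_scale) auto
  ultimately have "(\<Sum>x\<in>I. c x *\<^sub>R G x) = 0" by (rule CK_eq_0_imp[OF j, rotated])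
  then show "c x = 0" using indep_famD[OF indep _ x] by blast
qed

lemma sum_chain_Suc:
  assumes finB: "finite B" and l: "1 \<le> l" "Suc l \<le> n"
  shows "(\<Sum>x\<in>exps (Suc l) d \<times> B. c x *\<^sub>R chain \<mu> E n (fst x) (snd x) (Suc l))
    = (\<Sum>i\<le>d. (xvec E (Suc l) ^^ i) (CK \<mu> E n (Suc l)
        (\<Sum>y\<in>exps l (d - i) \<times> B. c ((fst y)(Suc l := i), snd y) *\<^sub>R chain \<mu> E n (fst y) (snd y) l)))"
proof -
  define \<phi> where "\<phi> i y = ((fst y)(Suc l := i), snd y)" for i and y :: "(nat \<Rightarrow> nat) \<times> 'v"
  define ch where "ch l' x = chain \<mu> E n (fst x) (snd x) l'" for l' and x :: "(nat \<Rightarrow> nat) \<times> 'v"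
  have L: "Suc l \<in> {1..n}" using l by simp
  have fibre: "bij_betw (\<phi> i) (exps l (d - i) \<times> B) {x \<in> exps (Suc l) d \<times> B. fst x (Suc l) = i}"
    if "i \<le> d" for i
    unfolding \<phi>_def[abs_def] by (rule exps_Suc_fibre[OF that])
  have ch_\<phi>: "ch (Suc l) (\<phi> i y) = (xvec E (Suc l) ^^ i) (CK \<mu> E n (Suc l) (ch l y))" for i y
  proof -
    have "chain \<mu> E n ((fst y)(Suc l := i)) (snd y) l = chain \<mu> E n (fst y) (snd y) l"
      by (rule chain_cong) simp
    then show ?thesis using l by (simp add: \<phi>_def ch_def chain_Suc)
  qed
  have fin: "fin_supp (ch l y)" for y using homog_chain[OF l(1)] l by (simp add: ch_def homog_iff)
  have "(\<Sum>x\<in>exps (Suc l) d \<times> B. c x *\<^sub>R ch (Suc l) x)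
      = (\<Sum>i\<le>d. \<Sum>x\<in>{x \<in> exps (Suc l) d \<times> B. fst x (Suc l) = i}. c x *\<^sub>R ch (Suc l) x)"
    using finB exps_finite exps_SucD(1)[of _ l d] by (intro sum.group[symmetric]) auto
  also have "\<dots> = (\<Sum>i\<le>d. \<Sum>y\<in>exps l (d - i) \<times> B. c (\<phi> i y) *\<^sub>R ch (Suc l) (\<phi> i y))"
    by (intro sum.cong refl sum.reindex_bij_betw[symmetric] fibre) auto
  also have "\<dots> = (\<Sum>i\<le>d. (xvec E (Suc l) ^^ i) (CK \<mu> E n (Suc l) (\<Sum>y\<in>exps l (d - i) \<times> B. c (\<phi> i y) *\<^sub>R ch l y)))"
  proof (intro sum.cong refl)
    fix i
    have lin: "linear (xvec E (Suc l) ^^ i)" using l by (intro linear_funpow linear_xvec) simp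
    show "(\<Sum>y\<in>exps l (d - i) \<times> B. c (\<phi> i y) *\<^sub>R ch (Suc l) (\<phi> i y))
        = (xvec E (Suc l) ^^ i) (CK \<mu> E n (Suc l) (\<Sum>y\<in>exps l (d - i) \<times> B. c (\<phi> i y) *\<^sub>R ch l y))"
      unfolding ch_\<phi> using exps_finite finB fin
      by (simp add: CK_sum[OF L] linear_sum[OF lin] linear_scale[OF lin])
  qed
  finally show ?thesis by (simp add: ch_def \<phi>_def)
qed

text \<open>A vanishing combination of the family for \<open>l + 1\<close> reads \<open>\<Sum>\<^sub>i x\<^bsub>[l+1]\<^esub>\<^sup>i CK(H\<^sub>i) = 0\<close>, each
  \<open>H\<^sub>i\<close> a combination of the family for \<open>l\<close>; the Fischer decomposition forces \<open>CK(H\<^sub>i) = 0\<close>,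
  hence \<open>H\<^sub>i = 0\<close>, and induction applies.\<close>

lemma chain_indep:
  assumes indepB: "independent B" and finB: "finite B" and l: "1 \<le> l" "l \<le> n"
  shows "indep_fam (\<lambda>x. chain \<mu> E n (fst x) (snd x) l) (exps l d \<times> B)"
  using l
proof (induction l arbitrary: d rule: nat_induct_at_least)
  case base
  have "(\<lambda>_. 0)(1 := J 1) = J" if "J \<in> exps 1 d" for J :: "nat \<Rightarrow> nat"
    using that by (auto simp: exps_def fun_eq_iff)
  then show ?case
    using indep_fam_monomials[OF indepB finB exps_finite, of 1 d] by (subst indep_fam_cong) auto
next
  case (Suc l)
  define H where "H c i = (\<Sum>y\<in>exps l (d - i) \<times> B. c ((fst y)(Suc l := i), snd y) *\<^sub>R chain \<mu> E n (fst y) (snd y) l)"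
    for c i
  have L: "2 \<le> Suc l" "Suc l \<le> n" "Suc l \<in> {1..n}" using Suc by auto
  have homog_ch: "homog l e (chain \<mu> E n (fst y) (snd y) l)" if "y \<in> exps l e \<times> B" for e y
    using that homog_chain[OF Suc.hyps, of "fst y"] Suc.prems by (auto simp: exps_def)
  have homog_H: "homog l (d - i) (H c i)" for c i
    unfolding H_def by (intro homog_sum homog_scale homog_ch) auto
  show ?case unfolding indep_fam_def
  proof (intro conjI allI impI ballI)
    show "finite (exps (Suc l) d \<times> B)" using exps_finite finB by simp
    fix c x assume Z: "(\<Sum>x\<in>exps (Suc l) d \<times> B. c x *\<^sub>R chain \<mu> E n (fst x) (snd x) (Suc l)) = 0"
      and x: "x \<in> exps (Suc l) d \<times> B"
    have "\<forall>i\<le>d. CK \<mu> E n (Suc l) (H c i) = 0"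
    proof (rule fischer_sum_eq_0[of "Suc l" d "\<lambda>i. d - i"])
      show "(\<Sum>i\<le>d. (xvec E (Suc l) ^^ i) (CK \<mu> E n (Suc l) (H c i))) = 0"
        using Z sum_chain_Suc[OF finB Suc.hyps Suc.prems] by (simp add: H_def)
      show "\<forall>i\<le>d. homog (Suc l) (d - i) (CK \<mu> E n (Suc l) (H c i)) \<and> dirac \<mu> E (Suc l) (CK \<mu> E n (Suc l) (H c i)) = 0"
      proof (intro allI impI)
        fix i
        have "homog (Suc l - 1) (d - i) (H c i)" using homog_H by simp
        from CK_homog_monogenic[OF L(1,2) this]
        show "homog (Suc l) (d - i) (CK \<mu> E n (Suc l) (H c i)) \<and> dirac \<mu> E (Suc l) (CK \<mu> E n (Suc l) (H c i)) = 0" .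
      qed
    qed (use L in auto)
    then have H0: "H c i = 0" if "i \<le> d" for i
      using that by (intro CK_eq_0_imp[OF L(3) homog_hyperplane[OF homog_H], rotated]) auto
    have IH: "indep_fam (\<lambda>x. chain \<mu> E n (fst x) (snd x) l) (exps l e \<times> B)" for e
      using Suc.IH Suc.prems by simp
    have c0: "c ((fst y)(Suc l := i), snd y) = 0" if "i \<le> d" "y \<in> exps l (d - i) \<times> B" for i y
      using indep_famD[OF IH, where c = "\<lambda>y. c ((fst y)(Suc l := i), snd y)", OF _ that(2)] H0[OF that(1)]
      by (simp add: H_def)
    show "c x = 0"
      using c0[of "fst x (Suc l)" "((fst x)(Suc l := 0), snd x)"] exps_SucD[of "fst x" l d] x by auto
  qed
qed

lemma homog_subset_span_chain:
  assumes indepB: "independent B" and finB: "finite B" and spanB: "span B = UNIV"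
    and l: "1 \<le> l" "l \<le> n"
  shows "{p. homog l d p} \<subseteq> span ((\<lambda>x. chain \<mu> E n (fst x) (snd x) l) ` (exps l d \<times> B))"
proof (rule subset_span_if_card_le[OF _ homog_subset_span_monomials[OF finB spanB]])
  let ?G = "\<lambda>x. chain \<mu> E n (fst x) (snd x) l"
  have indep: "indep_fam ?G (exps l d \<times> B)" using chain_indep[OF indepB finB l] .
  show "independent (?G ` (exps l d \<times> B))" by (rule indep_fam_independent_image[OF indep])
  show "?G ` (exps l d \<times> B) \<subseteq> {p. homog l d p}"
    using homog_chain[OF l] by (auto simp: exps_def)
  show "finite ((\<lambda>(\<alpha>, v). mono \<alpha> v) ` (exps l d \<times> B))" using exps_finite finB by simp
  have "card ((\<lambda>(\<alpha>, v). mono \<alpha> v) ` (exps l d \<times> B)) \<le> card (exps l d \<times> B)"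
    by (rule card_image_le) (use exps_finite finB in simp)
  also have "\<dots> = card (?G ` (exps l d \<times> B))"
    by (rule card_image[OF indep_fam_inj_on[OF indep], symmetric])
  finally show "card ((\<lambda>(\<alpha>, v). mono \<alpha> v) ` (exps l d \<times> B)) \<le> card (?G ` (exps l d \<times> B))" .
qed

end

lemma monogenic_iff: "p \<in> monogenic \<mu> E n k \<longleftrightarrow> homog n k p \<and> dirac \<mu> E n p = 0"
  by (simp add: monogenic_def zero_fun_def)

lemma mindex_bij_exps:
  assumes n3: "n \<ge> 3"
  shows "bij_betw (\<lambda>jj. jj(n-1 := k - (\<Sum>i=1..n-2. jj i))) (mindex n k) (exps (n-1) k)"
proof (rule bij_betw_byWitness[where f'="\<lambda>\<alpha>. \<alpha>(n-1 := 0)"])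
  have split_last: "(\<Sum>i=1..n-1. f i) = (\<Sum>i=1..n-2. f i) + f (n-1)" for f :: "nat \<Rightarrow> nat"
  proof -
    have "n - 1 = Suc (n - 2)" using n3 by simp
    then show ?thesis using n3 by simp
  qed
  have nn: "n - 1 \<notin> {1..n-2}" using n3 by auto
  have upd: "(\<Sum>i=1..n-2. (jj(n-1 := x)) i) = (\<Sum>i=1..n-2. jj i)" for jj :: "nat \<Rightarrow> nat" and x
    using nn by (intro sum.cong) auto
  show "\<forall>a\<in>mindex n k. (a(n-1 := k - (\<Sum>i=1..n-2. a i)))(n-1 := 0) = a"
    using nn by (auto simp: mindex_def fun_eq_iff)
  show "\<forall>a\<in>exps (n-1) k. (a(n-1 := 0))(n-1 := k - (\<Sum>i=1..n-2. (a(n-1 := 0)) i)) = a"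
  proof
    fix a assume "a \<in> exps (n-1) k"
    then have "a (n-1) = k - (\<Sum>i=1..n-2. a i)" using split_last[of a] by (simp add: exps_def)
    then show "(a(n-1 := 0))(n-1 := k - (\<Sum>i=1..n-2. (a(n-1 := 0)) i)) = a"
      unfolding upd by (auto simp: fun_eq_iff)
  qed
  show "(\<lambda>jj. jj(n-1 := k - (\<Sum>i=1..n-2. jj i))) ` mindex n k \<subseteq> exps (n-1) k"
  proof
    fix b assume "b \<in> (\<lambda>jj. jj(n-1 := k - (\<Sum>i=1..n-2. jj i))) ` mindex n k"
    then obtain a where a: "a \<in> mindex n k" and b: "b = a(n-1 := k - (\<Sum>i=1..n-2. a i))" by auto
    have "(\<Sum>i=1..n-1. b i) = (\<Sum>i=1..n-2. b i) + b (n-1)" by (rule split_last)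
    also have "\<dots> = k" unfolding b upd using a by (simp add: mindex_def)
    finally show "b \<in> exps (n-1) k" using a n3 unfolding b by (auto simp: mindex_def exps_def)
  qed
  show "(\<lambda>\<alpha>. \<alpha>(n-1 := 0)) ` exps (n-1) k \<subseteq> mindex n k"
  proof
    fix b assume "b \<in> (\<lambda>\<alpha>. \<alpha>(n-1 := 0)) ` exps (n-1) k"
    then obtain a where a: "a \<in> exps (n-1) k" and b: "b = a(n-1 := 0)" by auto
    have "(\<Sum>i=1..n-2. b i) \<le> k" using a split_last[of a] unfolding b upd by (simp add: exps_def)
    then show "b \<in> mindex n k" using a n3 unfolding b by (auto simp: exps_def mindex_def)
  qed
qed

context dunkl_clifford
begin

lemma subspace_monogenic: "subspace (monogenic \<mu> E n k)"
proof -
  have "monogenic \<mu> E n k = {p. homog n k p} \<inter> {p. dirac \<mu> E n p = 0}"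
    by (auto simp: monogenic_iff)
  then show ?thesis
    using real_vector.subspace_inter[OF subspace_homog linear_subspace_kernel[OF linear_dirac[OF order.refl]]]
    by simp
qed

lemma CK_mem_monogenic: "2 \<le> n \<Longrightarrow> homog (n - 1) k p \<Longrightarrow> CK \<mu> E n n p \<in> monogenic \<mu> E n k"
  using CK_homog_monogenic[of n] by (simp add: monogenic_iff)

lemma monogenic_eq_CK_restrict:
  assumes n: "2 \<le> n" and f: "f \<in> monogenic \<mu> E n k"
  defines "g \<equiv> \<lambda>\<beta>. if \<beta> n = 0 then f \<beta> else 0"
  shows "homog (n - 1) k g" and "f = CK \<mu> E n n g"
proof -
  have "{1..n} = insert n {1..n-1}" "n \<notin> {1..n-1}" using n by auto
  then have "\<beta> \<in> exps (n - 1) k" if "\<beta> \<in> exps n k" "\<beta> n = 0" for \<beta>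
    using that by (auto simp: exps_def)
  then show g: "homog (n - 1) k g"
    using f by (auto simp: g_def homog_iff_supp_exps monogenic_iff)
  have "dirac \<mu> E n (CK \<mu> E n n g) = 0" using CK_mem_monogenic[OF n g] by (simp add: monogenic_iff)
  then have D: "dirac \<mu> E n (f - CK \<mu> E n n g) = 0"
    using f linear_diff[OF linear_dirac[OF order.refl]] by (simp add: monogenic_iff)
  have z: "(f - CK \<mu> E n n g) \<beta> = 0" if "\<beta> n = 0" for \<beta>
    using that n by (simp add: CK_restrict g_def)
  have "f - CK \<mu> E n n g = 0" by (rule dirac_kernel_unique[OF _ order.refl D z]) (use n in auto)
  then show "f = CK \<mu> E n n g" by simp
qed

text \<open>Restriction to \<open>x\<^sub>n = 0\<close> inverts \<open>CK\<close> on monogenic polynomials, so \<open>CK\<close> carries any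
  spanning family of the homogeneous polynomials in \<open>x\<^sub>1, \<dots>, x\<^sub>n\<^sub>-\<^sub>1\<close> to one of the monogenics.\<close>

lemma span_CK_image_eq_monogenic:
  assumes n: "2 \<le> n" and finY: "finite Y" and G: "\<And>y. y \<in> Y \<Longrightarrow> homog (n - 1) k (G y)"
    and span: "{p. homog (n - 1) k p} \<subseteq> span (G ` Y)"
  shows "span ((\<lambda>y. CK \<mu> E n n (G y)) ` Y) = monogenic \<mu> E n k"
proof
  show "span ((\<lambda>y. CK \<mu> E n n (G y)) ` Y) \<subseteq> monogenic \<mu> E n k"
    using CK_mem_monogenic[OF n] G subspace_monogenic by (intro real_vector.span_minimal) auto
  show "monogenic \<mu> E n k \<subseteq> span ((\<lambda>y. CK \<mu> E n n (G y)) ` Y)"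
  proof
    fix f assume f: "f \<in> monogenic \<mu> E n k"
    define g where "g = (\<lambda>\<beta>. if \<beta> n = 0 then f \<beta> else 0)"
    have "g \<in> span (G ` Y)" using span monogenic_eq_CK_restrict(1)[OF n f] by (auto simp: g_def)
    then obtain u where u: "g = (\<Sum>s\<in>G ` Y. u s *\<^sub>R s)"
      using real_vector.span_finite[OF finite_imageI[OF finY]] by auto
    have fin: "fin_supp s" if "s \<in> G ` Y" for s using that G by (auto simp: homog_iff)
    have "f = CK \<mu> E n n g" using monogenic_eq_CK_restrict(2)[OF n f] by (simp add: g_def)
    also have "\<dots> = (\<Sum>s\<in>G ` Y. u s *\<^sub>R CK \<mu> E n n s)"
      unfolding u using n finY fin by (intro CK_sum) auto
    also have "\<dots> \<in> span ((\<lambda>y. CK \<mu> E n n (G y)) ` Y)"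
      by (intro real_vector.span_sum real_vector.span_scale real_vector.span_base) auto
    finally show "f \<in> span ((\<lambda>y. CK \<mu> E n n (G y)) ` Y)" .
  qed
qed

lemma is_basis_fam_CK_chain:
  assumes n: "2 \<le> n" and finB: "finite B" and indepB: "independent B" and spanB: "span B = UNIV"
  shows "is_basis_fam (monogenic \<mu> E n k)
    (\<lambda>x. CK \<mu> E n n (chain \<mu> E n (fst x) (snd x) (n - 1))) (exps (n - 1) k \<times> B)"
proof -
  define G where "G x = chain \<mu> E n (fst x) (snd x) (n - 1)" for x :: "(nat \<Rightarrow> nat) \<times> 'v"
  have l: "1 \<le> n - 1" "n - 1 \<le> n" "n \<in> {1..n}" using n by auto
  have G: "homog (n - 1) k (G x)" if "x \<in> exps (n - 1) k \<times> B" for x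
    using that homog_chain[OF l(1,2)] by (auto simp: G_def exps_def)
  have indep: "indep_fam (\<lambda>x. CK \<mu> E n n (G x)) (exps (n - 1) k \<times> B)"
    using chain_indep[OF indepB finB l(1,2), folded G_def] G homog_hyperplane[OF G] n
    by (intro indep_fam_CK[OF l(3)]) (auto simp: homog_iff)
  have "span ((\<lambda>x. CK \<mu> E n n (G x)) ` (exps (n - 1) k \<times> B)) = monogenic \<mu> E n k"
    using span_CK_image_eq_monogenic[OF n _ G homog_subset_span_chain[OF indepB finB spanB l(1,2), folded G_def]]
      exps_finite finB by simp
  then show ?thesis
    unfolding is_basis_fam_iff G_def[symmetric]
    using indep_fam_inj_on[OF indep] indep_fam_independent_image[OF indep] by blast
qed

end

theorem proposition6:
  fixes n k :: nat and \<mu> :: "nat \<Rightarrow> real" and E :: "nat \<Rightarrow> 'v::real_vector \<Rightarrow> 'v"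
    and B :: "'v set"
  assumes n3: "n \<ge> 3"
    and mu_pos: "\<forall>i\<in>{1..n}. \<mu> i > 0"
    and clif: "clifford_module n E"
    and finB: "finite B"
    and indepB: "independent B"
    and spanB: "span B = UNIV"
  shows "is_basis_fam (monogenic \<mu> E n k) (\<lambda>(jj, v). Psi \<mu> E n k jj v) (mindex n k \<times> B)"
proof -
  interpret dunkl_clifford n \<mu> E using mu_pos clif by unfold_locales
  define \<Phi> where "\<Phi> = map_prod (\<lambda>jj. jj(n - 1 := k - (\<Sum>i=1..n-2. jj i))) (id :: 'v \<Rightarrow> 'v)"
  have "bij_betw \<Phi> (mindex n k \<times> B) (exps (n - 1) k \<times> B)"
    unfolding \<Phi>_def by (rule bij_betw_map_prod[OF mindex_bij_exps[OF n3] bij_betw_id])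
  from is_basis_fam_reindex[OF this is_basis_fam_CK_chain[OF _ finB indepB spanB]]
  show ?thesis using n3 by (simp add: \<Phi>_def Psi_def split_def)
qed

end
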